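(* Let $N\ge 1$ and let $d<d'$ with $d\in\mathbb{N}$ and $d'\in\mathbb{N}\cup\{\infty\}$. Let $\lambda=(\lambda_1,\ldots,\lambda_d)$ with $1\ge\lambda_1\ge\cdots\ge\lambda_d\ge 0$ and $\sum_i\lambda_i=N$. Then $\lambda$ is compatible with respect to $\wedge^N[\mathcal{H}_d]$ if and only if $(\lambda_1,\ldots,\lambda_d,0,\ldots,0)$ (padded with $d'-d$ zeros) is compatible with respect to $\wedge^N[\mathcal{H}_{d'}]$. Equivalently, denoting by $\mathcal{P}_{N,k}$ the set of spectra compatible with respect to $\wedge^N[\mathcal{H}_k]$, one has $\mathcal{P}_{N,d}=\mathcal{P}_{N,d'}\cap\{\lambda_{d+1}=\lambda_{d+2}=\cdots=0\}$ (identifying a vector of length $d$ with its zero-padding).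
   Context: For $k\in\mathbb{N}\cup\{\infty\}$, $\mathcal{H}_k$ denotes a $k$-dimensional separable complex Hilbert space (the one-particle space), with $\mathcal{H}_d$ embedded as a subspace of $\mathcal{H}_{d'}$, and $\wedge^N[\mathcal{H}_k]$ the $N$-fold antisymmetric tensor power (the $N$-fermion space). For a normalized $|\Psi\rangle\in\wedge^N[\mathcal{H}_k]$, its one-particle reduced density operator is $\rho_1=N\,\mathrm{tr}_{N-1}[|\Psi\rangle\langle\Psi|]$ (partial trace over $N-1$ of the particles), normalized so that $\mathrm{tr}\rho_1=N$; its eigenvalues, listed in non-increasing order with multiplicity, are the natural occupation numbers. A vector $\lambda=(\lambda_1,\ldots,\lambda_k)$ with $1\ge\lambda_1\ge\lambda_2\ge\cdots\ge 0$ and $\sum\lambda_i=N$ is called compatible with respect to $\wedge^N[\mathcal{H}_k]$ if it is the ordered spectrum of $\rho_1$ for some normalized pure state $|\Psi\rangle\in\wedge^N[\mathcal{H}_k]$. *)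

theory Defs
  imports "HOL-Analysis.Analysis" "HOL-Combinatorics.Permutations"
begin

text \<open>One-particle space H_k realised as l^2 over the index set of basis labels
  {i. i < k}, with k :: enat (k = infinity allowed).  Vectors are functions
  nat => complex vanishing outside the index set.\<close>

definition idx :: "enat \<Rightarrow> nat set" where
  "idx k = {i. enat i < k}"

definition is_vec :: "enat \<Rightarrow> (nat \<Rightarrow> complex) \<Rightarrow> bool" where
  "is_vec k v \<longleftrightarrow> (\<forall>i. i \<notin> idx k \<longrightarrow> v i = 0) \<and> (\<lambda>i. (norm (v i))\<^sup>2) summable_on idx k"

definition inner_k :: "enat \<Rightarrow> (nat \<Rightarrow> complex) \<Rightarrow> (nat \<Rightarrow> complex) \<Rightarrow> complex" where
  "inner_k k u v = infsum (\<lambda>i. cnj (u i) * v i) (idx k)"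

text \<open>N-particle tensor space H_k^{otimes N} as l^2 over index tuples (lists of
  length N with entries in idx k); the wedge power is the antisymmetric part.\<close>

definition tuples :: "nat \<Rightarrow> enat \<Rightarrow> nat list set" where
  "tuples n k = {xs. length xs = n \<and> set xs \<subseteq> idx k}"

definition fermion_state :: "nat \<Rightarrow> enat \<Rightarrow> (nat list \<Rightarrow> complex) \<Rightarrow> bool" where
  "fermion_state N k \<Psi> \<longleftrightarrow>
     (\<forall>xs. xs \<notin> tuples N k \<longrightarrow> \<Psi> xs = 0) \<and>
     (\<forall>xs p. length xs = N \<longrightarrow> p permutes {..<N} \<longrightarrow>
         \<Psi> (permute_list p xs) = of_int (sign p) * \<Psi> xs) \<and>
     ((\<lambda>xs. (norm (\<Psi> xs))\<^sup>2) has_sum 1) (tuples N k)"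

text \<open>One-particle reduced density operator rho_1 = N tr_{N-1} |Psi><Psi|,
  given by its matrix elements <i|rho_1|j> (trace over particles 2..N).\<close>

definition rdm1 :: "nat \<Rightarrow> enat \<Rightarrow> (nat list \<Rightarrow> complex) \<Rightarrow> nat \<Rightarrow> nat \<Rightarrow> complex" where
  "rdm1 N k \<Psi> i j = of_nat N * infsum (\<lambda>ys. \<Psi> (i # ys) * cnj (\<Psi> (j # ys))) (tuples (N - 1) k)"

definition apply_op :: "enat \<Rightarrow> (nat \<Rightarrow> nat \<Rightarrow> complex) \<Rightarrow> (nat \<Rightarrow> complex) \<Rightarrow> nat \<Rightarrow> complex" where
  "apply_op k A v = (\<lambda>i. if i \<in> idx k then infsum (\<lambda>j. A i j * v j) (idx k) else 0)"

definition eigenspace_k :: "enat \<Rightarrow> (nat \<Rightarrow> nat \<Rightarrow> complex) \<Rightarrow> real \<Rightarrow> (nat \<Rightarrow> complex) set" where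
  "eigenspace_k k A \<mu> = {v. is_vec k v \<and> apply_op k A v = (\<lambda>i. complex_of_real \<mu> * v i)}"

text \<open>Multiplicity of mu as an eigenvalue (Hilbert dimension of the eigenspace):
  an orthonormal family of n vectors exists in the eigenspace.\<close>

definition has_orthonormal_family :: "enat \<Rightarrow> (nat \<Rightarrow> complex) set \<Rightarrow> nat \<Rightarrow> bool" where
  "has_orthonormal_family k E n \<longleftrightarrow>
     (\<exists>e :: nat \<Rightarrow> nat \<Rightarrow> complex. (\<forall>a<n. e a \<in> E) \<and>
        (\<forall>a<n. \<forall>b<n. inner_k k (e a) (e b) = (if a = b then 1 else 0)))"

text \<open>lam (restricted to indices < k) is the ordered spectrum (eigenvalues in
  non-increasing order, with multiplicity) of the positive operator A: it is
  non-increasing and non-negative, and each positive value occurs in lam exactly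
  as often as its multiplicity as an eigenvalue of A (the remaining entries are
  the zeros).\<close>

definition ordered_spectrum :: "enat \<Rightarrow> (nat \<Rightarrow> nat \<Rightarrow> complex) \<Rightarrow> (nat \<Rightarrow> real) \<Rightarrow> bool" where
  "ordered_spectrum k A lam \<longleftrightarrow>
     (\<forall>i j. i \<le> j \<longrightarrow> enat j < k \<longrightarrow> lam j \<le> lam i) \<and>
     (\<forall>i. enat i < k \<longrightarrow> 0 \<le> lam i) \<and>
     (\<forall>\<mu>>0. \<forall>n. has_orthonormal_family k (eigenspace_k k A \<mu>) n \<longleftrightarrow>
                 (\<exists>F. F \<subseteq> {i. enat i < k \<and> lam i = \<mu>} \<and> finite F \<and> card F = n))"

definition compatible :: "nat \<Rightarrow> enat \<Rightarrow> (nat \<Rightarrow> real) \<Rightarrow> bool" where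
  "compatible N k lam \<longleftrightarrow> (\<exists>\<Psi>. fermion_state N k \<Psi> \<and> ordered_spectrum k (rdm1 N k \<Psi>) lam)"

definition pad :: "nat \<Rightarrow> (nat \<Rightarrow> real) \<Rightarrow> nat \<Rightarrow> real" where
  "pad d lam i = (if i < d then lam i else 0)"

end

theory Submission
  imports Defs
begin

text \<open>Let \<open>f\<^sub>a\<close> (\<open>a < d\<close>, \<open>\<lambda>\<^sub>a > 0\<close>) be orthonormal eigenvectors of \<open>\<rho>\<^sub>1\<close> for its positive
  eigenvalues.  Contracting \<open>\<Psi>\<close> with \<open>f\<^sub>a\<close> in the first slot gives vectors of squared norm
  \<open>\<lambda>\<^sub>a / N\<close>; since \<open>\<Sum>\<^sub>a \<lambda>\<^sub>a = N = \<parallel>\<Psi>\<parallel>\<^sup>2\<close>, Bessel's inequality is an equality for every column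
  \<open>\<Psi>(\<cdot>, ys)\<close>, so each column lies in the span of the \<open>f\<^sub>a\<close>.  By antisymmetry the same holds in
  every slot, hence \<open>\<Psi> = \<Sum> c(a\<^sub>1\<dots>a\<^sub>N) f\<^bsub>a\<^sub>1\<^esub> \<otimes> \<dots> \<otimes> f\<^bsub>a\<^sub>N\<^esub>\<close>.  The coefficient array \<open>c\<close> is itself a
  normalised antisymmetric state on the labels \<open>{a < d}\<close>, hence a state in \<open>\<wedge>\<^sup>N[\<H>\<^sub>k]\<close> for every
  \<open>k \<ge> d\<close>, and its one-particle density matrix is \<open>\<langle>f\<^sub>a, \<rho>\<^sub>1 f\<^sub>b\<rangle> = diag(\<lambda>)\<close>.  A diagonal operator
  has its diagonal as ordered spectrum, so compatibility of \<open>\<lambda>\<close> does not depend on \<open>k \<ge> d\<close>.\<close>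

section \<open>Infinite sums\<close>

lemma summable_on_finite_sum:
  fixes g :: "'i \<Rightarrow> 'a \<Rightarrow> 'b::{topological_comm_monoid_add}"
  assumes "finite P" "\<And>p. p \<in> P \<Longrightarrow> g p summable_on A"
  shows "(\<lambda>x. \<Sum>p\<in>P. g p x) summable_on A"
  using assms
proof (induction P rule: finite_induct)
  case empty then show ?case by (simp add: summable_on_0)
next
  case (insert a F)
  then show ?case by (simp add: summable_on_add)
qed

lemma infsum_finite_sum:
  fixes g :: "'i \<Rightarrow> 'a \<Rightarrow> 'b::{topological_comm_monoid_add, t2_space}"
  assumes "finite P" "\<And>p. p \<in> P \<Longrightarrow> g p summable_on A"
  shows "infsum (\<lambda>x. \<Sum>p\<in>P. g p x) A = (\<Sum>p\<in>P. infsum (g p) A)"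
  using assms
proof (induction P rule: finite_induct)
  case empty then show ?case by simp
next
  case (insert a F)
  have "infsum (\<lambda>x. \<Sum>p\<in>insert a F. g p x) A = infsum (\<lambda>x. g a x + (\<Sum>p\<in>F. g p x)) A"
    using insert by simp
  also have "\<dots> = infsum (g a) A + infsum (\<lambda>x. \<Sum>p\<in>F. g p x) A"
    using insert by (intro infsum_add summable_on_finite_sum) auto
  finally show ?case using insert by simp
qed

lemma summable_on_diff:
  fixes f g :: "'a \<Rightarrow> 'b::{topological_ab_group_add}"
  assumes "f summable_on A" "g summable_on A"
  shows "(\<lambda>x. f x - g x) summable_on A"
proof -
  have "(\<lambda>x. f x + - g x) summable_on A"
    using assms by (intro summable_on_add) (auto simp: summable_on_uminus)
  then show ?thesis by simp
qed

lemma infsum_diff: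
  fixes f g :: "'a \<Rightarrow> 'b::{topological_ab_group_add, t2_space}"
  assumes "f summable_on A" "g summable_on A"
  shows "infsum (\<lambda>x. f x - g x) A = infsum f A - infsum g A"
proof -
  have "infsum (\<lambda>x. f x + - g x) A = infsum f A + infsum (\<lambda>x. - g x) A"
    using assms by (intro infsum_add) (auto simp: summable_on_uminus)
  then show ?thesis by (simp add: infsum_uminus)
qed

lemma infsum_of_real:
  "infsum (\<lambda>x. complex_of_real (f x)) A = complex_of_real (infsum f A)"
proof (cases "f summable_on A")
  case True
  then show ?thesis by (intro infsumI has_sum_of_real has_sum_infsum)
next
  case False
  have "\<not> (\<lambda>x. complex_of_real (f x)) summable_on A"
  proof
    assume "(\<lambda>x. complex_of_real (f x)) summable_on A"
    from summable_on_Re[OF this] False show False by simp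
  qed
  then show ?thesis using False by (simp add: infsum_not_exists)
qed

lemma infsum_product_swap: "infsum f (A \<times> B) = infsum (\<lambda>(x,y). f (y,x)) (B \<times> A)"
proof -
  have "bij_betw (\<lambda>(x,y). (y,x)) (B \<times> A) (A \<times> B)"
    by (rule bij_betwI[of _ _ _ "\<lambda>(x,y). (y,x)"]) auto
  from infsum_reindex_bij_betw[OF this, of f] show ?thesis by (simp add: case_prod_unfold)
qed

lemma summable_on_times_nonneg:
  fixes g :: "'a \<Rightarrow> real" and h :: "'b \<Rightarrow> real"
  assumes "g summable_on A" "h summable_on B" "\<And>a. a \<in> A \<Longrightarrow> g a \<ge> 0" "\<And>b. b \<in> B \<Longrightarrow> h b \<ge> 0"
  shows "(\<lambda>(a,b). g a * h b) summable_on (A \<times> B)"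
proof -
  have "((\<lambda>b. g a * h b) has_sum (g a * infsum h B)) B" for a
    using assms(2) by (intro has_sum_cmult_right has_sum_infsum)
  moreover have "(\<lambda>a. g a * infsum h B) summable_on A"
    using assms(1) by (intro summable_on_cmult_left)
  ultimately have "(\<lambda>(a,b). g a * h b) summable_on Sigma A (\<lambda>_. B)"
    by (intro summable_on_SigmaI[where g="\<lambda>a. g a * infsum h B"]) (use assms in auto)
  then show ?thesis by simp
qed

lemma summable_on_times_complex:
  fixes g :: "'a \<Rightarrow> complex" and h :: "'b \<Rightarrow> complex"
  assumes "g summable_on A" "h summable_on B"
  shows "(\<lambda>(a,b). g a * h b) summable_on (A \<times> B)"
    and "infsum (\<lambda>(a,b). g a * h b) (A \<times> B) = infsum g A * infsum h B"
proof -
  have ga: "(\<lambda>a. norm (g a)) summable_on A" and hb: "(\<lambda>b. norm (h b)) summable_on B"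
    using assms summable_on_iff_abs_summable_on_complex by blast+
  have "(\<lambda>(a,b). norm (g a) * norm (h b)) summable_on (A \<times> B)"
    by (rule summable_on_times_nonneg[OF ga hb]) auto
  then have "(\<lambda>x. norm ((\<lambda>(a,b). g a * h b) x)) summable_on (A \<times> B)"
    by (simp add: case_prod_unfold norm_mult)
  then show S: "(\<lambda>(a,b). g a * h b) summable_on (A \<times> B)"
    using summable_on_iff_abs_summable_on_complex by blast
  have "infsum (\<lambda>(a,b). g a * h b) (A \<times> B) = infsum (\<lambda>a. infsum (\<lambda>b. g a * h b) B) A"
    using S by (subst infsum_Sigma_banach[symmetric]) (auto simp: case_prod_unfold)
  also have "\<dots> = infsum (\<lambda>a. g a * infsum h B) A"
    by (simp add: infsum_cmult_right')
  also have "\<dots> = infsum g A * infsum h B"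
    by (simp add: infsum_cmult_left')
  finally show "infsum (\<lambda>(a,b). g a * h b) (A \<times> B) = infsum g A * infsum h B" .
qed

section \<open>Square-summable families\<close>

definition l2 :: "'a set \<Rightarrow> ('a \<Rightarrow> complex) \<Rightarrow> bool" where
  "l2 A f \<longleftrightarrow> (\<lambda>x. (norm (f x))\<^sup>2) summable_on A"

definition l2_inner :: "'a set \<Rightarrow> ('a \<Rightarrow> complex) \<Rightarrow> ('a \<Rightarrow> complex) \<Rightarrow> complex" where
  "l2_inner A u v = infsum (\<lambda>x. cnj (u x) * v x) A"

lemma l2_prod_summable:
  assumes "l2 A f" "l2 A g"
  shows "(\<lambda>x. f x * g x) summable_on A"
proof -
  have s: "(\<lambda>x. ((norm (f x))\<^sup>2 + (norm (g x))\<^sup>2) / 2) summable_on A"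
    using assms unfolding l2_def divide_inverse
    by (intro summable_on_cmult_left summable_on_add) auto
  have "(\<lambda>x. norm (f x * g x)) summable_on A"
  proof (rule Infinite_Sum.abs_summable_on_comparison_test'[OF s])
    fix x
    have "2 * (norm (f x) * norm (g x)) \<le> (norm (f x))\<^sup>2 + (norm (g x))\<^sup>2"
      using sum_squares_bound[of "norm (f x)" "norm (g x)"] by simp
    then show "norm (f x * g x) \<le> ((norm (f x))\<^sup>2 + (norm (g x))\<^sup>2) / 2"
      by (simp add: norm_mult)
  qed
  then show ?thesis
    using summable_on_iff_abs_summable_on_complex by blast
qed

lemma l2_cnj: "l2 A (\<lambda>x. cnj (f x)) \<longleftrightarrow> l2 A f"
  by (simp add: l2_def)

lemma l2_inner_summable:
  assumes "l2 A f" "l2 A g"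
  shows "(\<lambda>x. cnj (f x) * g x) summable_on A"
  using l2_prod_summable[of A "\<lambda>x. cnj (f x)" g] assms by (simp add: l2_cnj)

lemma l2_cmult: "l2 A f \<Longrightarrow> l2 A (\<lambda>x. c * f x)"
  unfolding l2_def by (simp add: norm_mult power_mult_distrib summable_on_cmult_right)

lemma l2_add:
  assumes "l2 A f" "l2 A g"
  shows "l2 A (\<lambda>x. f x + g x)"
proof -
  have s: "(\<lambda>x. 2 * (norm (f x))\<^sup>2 + 2 * (norm (g x))\<^sup>2) summable_on A"
    using assms unfolding l2_def
    by (intro summable_on_cmult_right summable_on_add) auto
  show ?thesis unfolding l2_def
  proof (rule summable_on_comparison_test[OF s])
    fix x
    have "norm (f x + g x) \<le> norm (f x) + norm (g x)" by (rule norm_triangle_ineq)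
    then have "(norm (f x + g x))\<^sup>2 \<le> (norm (f x) + norm (g x))\<^sup>2"
      by (simp add: power_mono)
    also have "\<dots> \<le> 2 * (norm (f x))\<^sup>2 + 2 * (norm (g x))\<^sup>2"
      using sum_squares_bound[of "norm (f x)" "norm (g x)"] by (simp add: power2_sum)
    finally show "(norm (f x + g x))\<^sup>2 \<le> 2 * (norm (f x))\<^sup>2 + 2 * (norm (g x))\<^sup>2" .
  qed auto
qed

lemma l2_uminus: "l2 A f \<Longrightarrow> l2 A (\<lambda>x. - f x)"
  unfolding l2_def by simp

lemma l2_diff:
  assumes "l2 A f" "l2 A g"
  shows "l2 A (\<lambda>x. f x - g x)"
  using l2_add[OF assms(1) l2_uminus[OF assms(2)]] by simp

lemma l2_sum:
  assumes "finite P" "\<And>p. p \<in> P \<Longrightarrow> l2 A (g p)"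
  shows "l2 A (\<lambda>x. \<Sum>p\<in>P. g p x)"
  using assms
proof (induction P rule: finite_induct)
  case empty then show ?case by (simp add: l2_def summable_on_0)
next
  case (insert a F)
  then show ?case by (simp add: l2_add)
qed

lemma l2_inner_cnj: "cnj (l2_inner A u v) = l2_inner A v u"
  unfolding l2_inner_def by (simp flip: infsum_cnj add: mult.commute)

lemma l2_inner_diff_right:
  assumes "l2 A u" "l2 A v" "l2 A w"
  shows "l2_inner A u (\<lambda>x. v x - w x) = l2_inner A u v - l2_inner A u w"
  unfolding l2_inner_def using assms
  by (simp add: right_diff_distrib infsum_diff l2_inner_summable)

lemma l2_inner_diff_left:
  assumes "l2 A u" "l2 A v" "l2 A w"
  shows "l2_inner A (\<lambda>x. u x - v x) w = l2_inner A u w - l2_inner A v w"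
  unfolding l2_inner_def using assms
  by (simp add: left_diff_distrib infsum_diff l2_inner_summable)

lemma l2_inner_cmult_right: "l2_inner A u (\<lambda>x. c * v x) = c * l2_inner A u v"
  unfolding l2_inner_def
  by (simp add: mult.left_commute infsum_cmult_right')

lemma l2_inner_cmult_left: "l2_inner A (\<lambda>x. c * u x) v = cnj c * l2_inner A u v"
  unfolding l2_inner_def
  by (simp add: mult.assoc infsum_cmult_right')

lemma l2_inner_sum_right:
  assumes "finite P" "l2 A u" "\<And>p. p \<in> P \<Longrightarrow> l2 A (g p)"
  shows "l2_inner A u (\<lambda>x. \<Sum>p\<in>P. g p x) = (\<Sum>p\<in>P. l2_inner A u (g p))"
  unfolding l2_inner_def using assms
  by (simp add: sum_distrib_left infsum_finite_sum l2_inner_summable)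

lemma l2_inner_sum_left:
  assumes "finite P" "l2 A u" "\<And>p. p \<in> P \<Longrightarrow> l2 A (g p)"
  shows "l2_inner A (\<lambda>x. \<Sum>p\<in>P. g p x) u = (\<Sum>p\<in>P. l2_inner A (g p) u)"
  unfolding l2_inner_def using assms
  by (simp add: sum_distrib_right infsum_finite_sum l2_inner_summable)

definition l2_norm2 :: "'a set \<Rightarrow> ('a \<Rightarrow> complex) \<Rightarrow> real" where
  "l2_norm2 A f = infsum (\<lambda>x. (norm (f x))\<^sup>2) A"

lemma l2_inner_self: "l2_inner A v v = complex_of_real (l2_norm2 A v)"
proof -
  have "l2_inner A v v = infsum (\<lambda>x. complex_of_real ((norm (v x))\<^sup>2)) A"
    unfolding l2_inner_def by (intro infsum_cong) (metis complex_norm_square mult.commute)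
  also have "\<dots> = complex_of_real (l2_norm2 A v)"
    unfolding l2_norm2_def
    by (rule infsum_of_real)
  finally show ?thesis .
qed

lemma l2_inner_cong: "(\<And>x. x \<in> A \<Longrightarrow> u x = u' x) \<Longrightarrow> (\<And>x. x \<in> A \<Longrightarrow> v x = v' x) \<Longrightarrow> l2_inner A u v = l2_inner A u' v'"
  unfolding l2_inner_def by (intro infsum_cong) auto

lemma l2_if_inner_self_summable:
  "(\<lambda>x. cnj (g x) * g x) summable_on A \<Longrightarrow> l2 A g"
  unfolding l2_def
proof -
  assume "(\<lambda>x. cnj (g x) * g x) summable_on A"
  then have "(\<lambda>x. Re (cnj (g x) * g x)) summable_on A" by (rule summable_on_Re)
  moreover have "Re (cnj (g x) * g x) = (norm (g x))\<^sup>2" for x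
    by (metis Re_complex_of_real complex_norm_square mult.commute)
  ultimately show "(\<lambda>x. (norm (g x))\<^sup>2) summable_on A" by simp
qed

lemma l2_inner_orthonormal_sum:
  assumes P: "finite P" and le: "\<And>b. b \<in> P \<Longrightarrow> l2 A (e b)"
    and on: "\<And>a b. a \<in> P \<Longrightarrow> b \<in> P \<Longrightarrow> l2_inner A (e a) (e b) = (if a = b then 1 else 0)"
    and a: "a \<in> P"
  shows "l2_inner A (e a) (\<lambda>x. \<Sum>b\<in>P. c b * e b x) = c a"
proof -
  have "l2_inner A (e a) (\<lambda>x. \<Sum>b\<in>P. c b * e b x) = (\<Sum>b\<in>P. l2_inner A (e a) (\<lambda>x. c b * e b x))"
    using P le[OF a] le by (intro l2_inner_sum_right) (auto intro: l2_cmult)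
  also have "\<dots> = (\<Sum>b\<in>P. c b * (if a = b then 1 else 0))"
    using on a by (intro sum.cong refl) (simp add: l2_inner_cmult_right)
  also have "\<dots> = c a"
    using P a by (simp add: if_distrib cong: if_cong)
  finally show ?thesis .
qed

lemma l2_inner_diff_self:
  assumes "l2 A w" "l2 A y"
  shows "l2_inner A (\<lambda>x. w x - y x) (\<lambda>x. w x - y x)
           = l2_inner A w w - l2_inner A w y - l2_inner A y w + l2_inner A y y"
  using assms l2_diff[OF assms] by (simp add: l2_inner_diff_left l2_inner_diff_right)

lemma bessel_identity:
  assumes P: "finite P" and le: "\<And>a. a\<in>P \<Longrightarrow> l2 A (e a)"
    and on: "\<And>a b. a\<in>P \<Longrightarrow> b\<in>P \<Longrightarrow> l2_inner A (e a) (e b) = (if a = b then 1 else 0)"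
    and lw: "l2 A w"
  shows "l2_norm2 A (\<lambda>x. w x - (\<Sum>a\<in>P. l2_inner A (e a) w * e a x)) = l2_norm2 A w - (\<Sum>a\<in>P. (norm (l2_inner A (e a) w))\<^sup>2)"
proof -
  define c where "c a = l2_inner A (e a) w" for a
  define y where "y x = (\<Sum>a\<in>P. c a * e a x)" for x
  have lea: "l2 A (\<lambda>x. c a * e a x)" if "a \<in> P" for a using le[OF that] by (rule l2_cmult)
  have yfun: "y = (\<lambda>x. \<Sum>a\<in>P. c a * e a x)" by (simp add: fun_eq_iff y_def)
  have ly: "l2 A y" unfolding yfun using P lea by (intro l2_sum) auto
  have wy: "l2_inner A w y = (\<Sum>a\<in>P. c a * cnj (c a))"
  proof -
    have "l2_inner A w y = (\<Sum>a\<in>P. l2_inner A w (\<lambda>x. c a * e a x))"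
      unfolding yfun using P lw lea by (rule l2_inner_sum_right)
    also have "\<dots> = (\<Sum>a\<in>P. c a * l2_inner A w (e a))" by (simp add: l2_inner_cmult_right)
    also have "\<dots> = (\<Sum>a\<in>P. c a * cnj (c a))"
      unfolding c_def by (intro sum.cong refl) (simp add: l2_inner_cnj)
    finally show ?thesis .
  qed
  have yv: "l2_inner A y v = (\<Sum>a\<in>P. cnj (c a) * l2_inner A (e a) v)" if "l2 A v" for v
  proof -
    have "l2_inner A y v = (\<Sum>a\<in>P. l2_inner A (\<lambda>x. c a * e a x) v)"
      unfolding yfun using P that lea by (rule l2_inner_sum_left)
    also have "\<dots> = (\<Sum>a\<in>P. cnj (c a) * l2_inner A (e a) v)" by (simp add: l2_inner_cmult_left)
    finally show ?thesis .
  qed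
  have yw: "l2_inner A y w = (\<Sum>a\<in>P. cnj (c a) * c a)"
    using yv[OF lw] by (simp add: c_def)
  have eay: "l2_inner A (e a) y = c a" if "a \<in> P" for a
    unfolding yfun using P le on that by (rule l2_inner_orthonormal_sum)
  have yy: "l2_inner A y y = (\<Sum>a\<in>P. cnj (c a) * c a)"
    using yv[OF ly] eay by simp
  have sq: "(\<Sum>a\<in>P. cnj (c a) * c a) = complex_of_real (\<Sum>a\<in>P. (norm (c a))\<^sup>2)"
    unfolding of_real_sum by (intro sum.cong refl) (metis complex_norm_square mult.commute)
  have "complex_of_real (l2_norm2 A (\<lambda>x. w x - y x))
      = l2_inner A w w - l2_inner A w y - l2_inner A y w + l2_inner A y y"
    by (simp flip: l2_inner_self add: l2_inner_diff_self[OF lw ly])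
  also have "\<dots> = complex_of_real (l2_norm2 A w - (\<Sum>a\<in>P. (norm (c a))\<^sup>2))"
    using wy yw yy sq by (simp add: l2_inner_self mult.commute)
  finally show ?thesis unfolding y_def c_def by (simp only: of_real_eq_iff)
qed

lemma l2_norm2_nonneg: "l2_norm2 A f \<ge> 0"
  unfolding l2_norm2_def by (rule infsum_nonneg) auto

lemma l2_inner_unit_norm_le:
  assumes "l2 A e" "l2_inner A e e = 1" "l2 A w"
  shows "(norm (l2_inner A e w))\<^sup>2 \<le> l2_norm2 A w"
proof -
  have "l2_norm2 A (\<lambda>x. w x - l2_inner A e w * e x) = l2_norm2 A w - (norm (l2_inner A e w))\<^sup>2"
    using bessel_identity[of "{0::nat}" A "\<lambda>_. e" w] assms by simp
  then show ?thesis using l2_norm2_nonneg[of A "\<lambda>x. w x - l2_inner A e w * e x"] by simp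
qed

lemma l2_reindex:
  assumes "l2 A g" "inj_on h B" "h ` B \<subseteq> A"
  shows "l2 B (\<lambda>x. g (h x))"
proof -
  have "(\<lambda>x. (norm (g x))\<^sup>2) summable_on h ` B"
    using assms(1,3) unfolding l2_def by (rule summable_on_subset_banach)
  then show ?thesis unfolding l2_def using summable_on_reindex[OF assms(2), of "\<lambda>x. (norm (g x))\<^sup>2"] by (simp add: o_def)
qed

lemma l2_norm2_eq_0D:
  assumes "l2 A f" "l2_norm2 A f = 0" "x \<in> A"
  shows "f x = 0"
proof -
  have "(\<lambda>x. (norm (f x))\<^sup>2) x = 0"
    using assms unfolding l2_def l2_norm2_def
    by (intro nonneg_infsum_le_0D[where A=A]) auto
  then show ?thesis by simp
qed

lemma l2_times:
  assumes "l2 A g" "l2 B h"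
  shows "l2 (A \<times> B) (\<lambda>(a,b). g a * h b)"
proof -
  have "(\<lambda>(a,b). (norm (g a))\<^sup>2 * (norm (h b))\<^sup>2) summable_on (A \<times> B)"
    using assms unfolding l2_def by (intro summable_on_times_nonneg) auto
  then show ?thesis unfolding l2_def
    by (simp add: case_prod_unfold norm_mult power_mult_distrib)
qed

section \<open>Tuples and elementary tensors\<close>

lemma tuples_Suc_Cons:
  "tuples (Suc n) k = (\<lambda>(i,ys). i # ys) ` (idx k \<times> tuples n k)"
  unfolding tuples_def
  by (auto simp: length_Suc_conv image_iff)

lemma inj_Cons_pair: "inj_on (\<lambda>(i,ys). i # ys) X"
  by (auto simp: inj_on_def)

lemma tuples_Suc_snoc:
  "tuples (Suc n) k = (\<lambda>(ys,y). ys @ [y]) ` (tuples n k \<times> idx k)"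
proof -
  have "xs \<in> (\<lambda>(ys,y). ys @ [y]) ` (tuples n k \<times> idx k)" if "xs \<in> tuples (Suc n) k" for xs
  proof -
    from that have "xs \<noteq> []" "length xs = Suc n" "set xs \<subseteq> idx k" by (auto simp: tuples_def)
    then have "xs = butlast xs @ [last xs]" "butlast xs \<in> tuples n k" "last xs \<in> idx k"
      by (auto simp: tuples_def dest: in_set_butlastD)
    then show ?thesis by (auto simp: image_iff)
  qed
  then show ?thesis by (auto simp: tuples_def)
qed

lemma inj_snoc_pair: "inj_on (\<lambda>(ys,y). ys @ [y]) X"
  by (auto simp: inj_on_def)

lemma infsum_tuples_Suc:
  "infsum g (tuples (Suc n) k) = infsum (\<lambda>(i,ys). g (i # ys)) (idx k \<times> tuples n k)"
  by (simp only: tuples_Suc_Cons infsum_reindex[OF inj_Cons_pair]) (simp add: o_def case_prod_unfold)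

lemma summable_tuples_Suc:
  "g summable_on (tuples (Suc n) k) \<longleftrightarrow> (\<lambda>(i,ys). g (i # ys)) summable_on (idx k \<times> tuples n k)"
  by (simp only: tuples_Suc_Cons summable_on_reindex[OF inj_Cons_pair]) (simp add: o_def case_prod_unfold)

lemma infsum_tuples_snoc:
  "infsum g (tuples (Suc n) k) = infsum (\<lambda>(ys,y). g (ys @ [y])) (tuples n k \<times> idx k)"
  by (simp only: tuples_Suc_snoc infsum_reindex[OF inj_snoc_pair]) (simp add: o_def case_prod_unfold)

lemma tuples_0: "tuples 0 k = {[]}"
  by (auto simp: tuples_def)

definition lists_over :: "nat set \<Rightarrow> nat \<Rightarrow> nat list set" where
  "lists_over P n = {as. length as = n \<and> set as \<subseteq> P}"

lemma finite_lists_over: "finite P \<Longrightarrow> finite (lists_over P n)"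
  unfolding lists_over_def using finite_lists_length_eq[of P n] by (metis (no_types, lifting) Collect_cong)

lemma lists_over_0: "lists_over P 0 = {[]}" by (auto simp: lists_over_def)

lemma lists_over_Suc: "lists_over P (Suc n) = (\<lambda>(a,as). a # as) ` (P \<times> lists_over P n)"
  unfolding lists_over_def by (auto simp: length_Suc_conv image_iff)

lemma lists_over_snoc: "lists_over P (Suc n) = (\<lambda>(as,a). as @ [a]) ` (lists_over P n \<times> P)"
proof -
  have "xs \<in> (\<lambda>(as,a). as @ [a]) ` (lists_over P n \<times> P)" if "xs \<in> lists_over P (Suc n)" for xs
  proof -
    from that have "xs \<noteq> []" "length xs = Suc n" "set xs \<subseteq> P" by (auto simp: lists_over_def)
    then have "xs = butlast xs @ [last xs]" "butlast xs \<in> lists_over P n" "last xs \<in> P"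
      by (auto simp: lists_over_def dest: in_set_butlastD)
    then show ?thesis by (auto simp: image_iff)
  qed
  then show ?thesis by (auto simp: lists_over_def)
qed

lemma sum_lists_over_Suc:
  assumes "finite P"
  shows "(\<Sum>as\<in>lists_over P (Suc n). g as) = (\<Sum>a\<in>P. \<Sum>as\<in>lists_over P n. g (a # as))"
proof -
  have "(\<Sum>as\<in>lists_over P (Suc n). g as) = (\<Sum>x\<in>P \<times> lists_over P n. g (fst x # snd x))"
    unfolding lists_over_Suc by (subst sum.reindex[OF inj_Cons_pair]) (simp add: case_prod_unfold)
  also have "\<dots> = (\<Sum>a\<in>P. \<Sum>as\<in>lists_over P n. g (a # as))"
    by (simp add: sum.cartesian_product case_prod_unfold)
  finally show ?thesis .
qed

lemma sum_lists_over_snoc: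
  assumes "finite P"
  shows "(\<Sum>as\<in>lists_over P (Suc n). g as) = (\<Sum>as\<in>lists_over P n. \<Sum>a\<in>P. g (as @ [a]))"
proof -
  have "(\<Sum>as\<in>lists_over P (Suc n). g as) = (\<Sum>x\<in>lists_over P n \<times> P. g (fst x @ [snd x]))"
    unfolding lists_over_snoc by (subst sum.reindex[OF inj_snoc_pair]) (simp add: case_prod_unfold)
  also have "\<dots> = (\<Sum>as\<in>lists_over P n. \<Sum>a\<in>P. g (as @ [a]))"
    by (simp add: sum.cartesian_product case_prod_unfold)
  finally show ?thesis .
qed

definition tensor :: "(nat \<Rightarrow> nat \<Rightarrow> complex) \<Rightarrow> nat list \<Rightarrow> nat list \<Rightarrow> complex" where
  "tensor f as xs = prod_list (map (\<lambda>(a,x). f a x) (zip as xs))"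

lemma tensor_Nil[simp]: "tensor f [] xs = 1"
  by (simp add: tensor_def)

lemma tensor_Cons[simp]: "tensor f (a # as) (x # xs) = f a x * tensor f as xs"
  by (simp add: tensor_def)

lemma tensor_snoc: "length as = length ys \<Longrightarrow> tensor f (as @ [b]) (ys @ [y]) = tensor f as ys * f b y"
  by (simp add: tensor_def)

lemma tensor_orthonormal:
  assumes l2_f: "\<And>a. a \<in> P \<Longrightarrow> l2 (idx k) (f a)"
    and on_f: "\<And>a b. a \<in> P \<Longrightarrow> b \<in> P \<Longrightarrow> l2_inner (idx k) (f a) (f b) = (if a = b then 1 else 0)"
  shows "zs \<in> lists_over P n \<Longrightarrow> ws \<in> lists_over P n \<Longrightarrow>
     (\<lambda>ys. cnj (tensor f zs ys) * tensor f ws ys) summable_on tuples n k \<and>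
     l2_inner (tuples n k) (tensor f zs) (tensor f ws) = (if zs = ws then 1 else 0)"
proof (induction n arbitrary: zs ws)
  case 0
  then show ?case by (simp add: lists_over_0 tuples_0 l2_inner_def)
next
  case (Suc n)
  from Suc.prems obtain z zs' w ws' where zs: "zs = z # zs'" "z \<in> P" "zs' \<in> lists_over P n"
    and ws: "ws = w # ws'" "w \<in> P" "ws' \<in> lists_over P n"
    unfolding lists_over_Suc by auto
  have s1: "(\<lambda>i. cnj (f z i) * f w i) summable_on idx k"
    using l2_f zs ws by (intro l2_inner_summable) auto
  from Suc.IH[OF zs(3) ws(3)] have s2: "(\<lambda>ys. cnj (tensor f zs' ys) * tensor f ws' ys) summable_on tuples n k"
    and i2: "l2_inner (tuples n k) (tensor f zs') (tensor f ws') = (if zs' = ws' then 1 else 0)" by auto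
  have eq: "(\<lambda>(i,ys). cnj (tensor f zs (i # ys)) * tensor f ws (i # ys)) =
     (\<lambda>(i,ys). (cnj (f z i) * f w i) * (cnj (tensor f zs' ys) * tensor f ws' ys))"
    using zs ws by (auto simp: fun_eq_iff)
  have S: "(\<lambda>(i,ys). (cnj (f z i) * f w i) * (cnj (tensor f zs' ys) * tensor f ws' ys)) summable_on (idx k \<times> tuples n k)"
    and V: "infsum (\<lambda>(i,ys). (cnj (f z i) * f w i) * (cnj (tensor f zs' ys) * tensor f ws' ys)) (idx k \<times> tuples n k)
       = l2_inner (idx k) (f z) (f w) * l2_inner (tuples n k) (tensor f zs') (tensor f ws')"
    using summable_on_times_complex[OF s1 s2] by (auto simp: l2_inner_def)
  show ?case
  proof
    show "(\<lambda>ys. cnj (tensor f zs ys) * tensor f ws ys) summable_on tuples (Suc n) k"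
      unfolding summable_tuples_Suc using S eq by (simp add: case_prod_unfold)
    have "l2_inner (tuples (Suc n) k) (tensor f zs) (tensor f ws) = l2_inner (idx k) (f z) (f w) * l2_inner (tuples n k) (tensor f zs') (tensor f ws')"
      unfolding l2_inner_def infsum_tuples_Suc using V eq by (simp add: case_prod_unfold l2_inner_def)
    then show "l2_inner (tuples (Suc n) k) (tensor f zs) (tensor f ws) = (if zs = ws then 1 else 0)"
      using i2 on_f zs ws by auto
  qed
qed

lemma tensor_permute:
  assumes p: "p permutes {..<n}" and la: "length as = n" and ly: "length ys = n"
  shows "tensor f (permute_list p as) (permute_list p ys) = tensor f as ys"
proof -
  have "permute_list p (zip as ys) = zip (permute_list p as) (permute_list p ys)"
    by (rule permute_list_zip[OF p]) (use la ly in auto)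
  then have "zip (permute_list p as) (permute_list p ys) = permute_list p (zip as ys)" by simp
  moreover have "permute_list p (map (\<lambda>(a,x). f a x) (zip as ys)) = map (\<lambda>(a,x). f a x) (permute_list p (zip as ys))"
    by (rule permute_list_map) (use p la ly in simp)
  moreover have "prod_list (permute_list p (map (\<lambda>(a,x). f a x) (zip as ys))) = prod_list (map (\<lambda>(a,x). f a x) (zip as ys))"
    using p la ly by (simp flip: prod_mset_prod_list)
  ultimately show ?thesis unfolding tensor_def by metis
qed

lemma permute_list_inv:
  assumes p: "p permutes {..<length xs}"
  shows "permute_list (inv p) (permute_list p xs) = xs" "permute_list p (permute_list (inv p) xs) = xs"
proof -
  have inv_p: "inv p permutes {..<length xs}" using p by (rule permutes_inv)
  show "permute_list (inv p) (permute_list p xs) = xs"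
    using permute_list_compose[OF inv_p, of p] permutes_inv_o(1)[OF p] by simp
  show "permute_list p (permute_list (inv p) xs) = xs"
    using permute_list_compose[OF p, of "inv p"] permutes_inv_o(2)[OF p] by simp
qed

lemma permute_list_transpose_update:
  assumes t: "t < length L"
  shows "permute_list (Transposition.transpose 0 t) (L[t := y]) =
           y # tl (permute_list (Transposition.transpose 0 t) L)"
proof (rule nth_equalityI)
  let ?p = "Transposition.transpose 0 t"
  have pp: "?p permutes {..<length L}" using t by (intro permutes_swap_id) auto
  then show "length (permute_list ?p (L[t := y])) = length (y # tl (permute_list ?p L))"
    using t by simp
  fix i assume "i < length (permute_list ?p (L[t := y]))"
  then have i: "i < length L" by simp
  show "permute_list ?p (L[t := y]) ! i = (y # tl (permute_list ?p L)) ! i"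
  proof (cases "i = 0")
    case True
    then show ?thesis using permute_list_nth[of ?p "L[t := y]"] pp i t by simp
  next
    case False
    then have "?p i \<noteq> t" by (auto simp: Transposition.transpose_def split: if_splits)
    then show ?thesis
      using False permute_list_nth[of ?p "L[t := y]"] permute_list_nth[of ?p L] pp i
      by (simp add: nth_tl)
  qed
qed

lemma inner_k_eq_l2_inner: "inner_k k u v = l2_inner (idx k) u v"
  by (simp add: inner_k_def l2_inner_def)

section \<open>Expansion of a fermionic state in natural orbitals\<close>

locale fermion =
  fixes N :: nat and k :: enat and \<Psi> :: "nat list \<Rightarrow> complex"
  assumes N_pos: "N \<ge> 1" and state: "fermion_state N k \<Psi>"
begin

definition contract :: "(nat \<Rightarrow> complex) \<Rightarrow> nat list \<Rightarrow> complex" where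
  "contract v ys = l2_inner (idx k) v (\<lambda>i. \<Psi> (i # ys))"

lemma N_eq_Suc: "N = Suc (N - 1)" using N_pos by simp

lemma antisymmetric: "length xs = N \<Longrightarrow> p permutes {..<N} \<Longrightarrow> \<Psi> (permute_list p xs) = of_int (sign p) * \<Psi> xs"
  using state unfolding fermion_state_def by auto

lemma normalised: "((\<lambda>xs. (norm (\<Psi> xs))\<^sup>2) has_sum 1) (tuples N k)"
  using state unfolding fermion_state_def by auto

lemma l2_state: "l2 (tuples N k) \<Psi>" and l2_norm2_state: "l2_norm2 (tuples N k) \<Psi> = 1"
  using normalised unfolding l2_def l2_norm2_def by (auto simp: summable_on_def infsumI)

lemma first_slot_summable: "(\<lambda>(i,ys). (norm (\<Psi> (i # ys)))\<^sup>2) summable_on (idx k \<times> tuples (N - 1) k)"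
  and first_slot_sum: "infsum (\<lambda>(i,ys). (norm (\<Psi> (i # ys)))\<^sup>2) (idx k \<times> tuples (N - 1) k) = 1"
proof -
  have s: "(\<lambda>xs. (norm (\<Psi> xs))\<^sup>2) summable_on tuples (Suc (N - 1)) k"
    using l2_state N_eq_Suc unfolding l2_def by simp
  show "(\<lambda>(i,ys). (norm (\<Psi> (i # ys)))\<^sup>2) summable_on (idx k \<times> tuples (N - 1) k)"
    using s unfolding summable_tuples_Suc by (simp add: case_prod_unfold)
  have "infsum (\<lambda>xs. (norm (\<Psi> xs))\<^sup>2) (tuples (Suc (N - 1)) k) = 1"
    using l2_norm2_state N_eq_Suc unfolding l2_norm2_def by simp
  then show "infsum (\<lambda>(i,ys). (norm (\<Psi> (i # ys)))\<^sup>2) (idx k \<times> tuples (N - 1) k) = 1"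
    unfolding infsum_tuples_Suc by (simp add: case_prod_unfold)
qed

lemma l2_first_slot: "l2 (idx k \<times> tuples (N - 1) k) (\<lambda>(i,ys). \<Psi> (i # ys))"
  using first_slot_summable unfolding l2_def by (simp add: case_prod_unfold)

lemma l2_row: "i \<in> idx k \<Longrightarrow> l2 (tuples (N - 1) k) (\<lambda>ys. \<Psi> (i # ys))"
  by (rule l2_reindex[OF l2_state]) (use N_pos in \<open>auto simp: inj_on_def tuples_def\<close>)

lemma l2_column: "ys \<in> tuples (N - 1) k \<Longrightarrow> l2 (idx k) (\<lambda>i. \<Psi> (i # ys))"
  by (rule l2_reindex[OF l2_state]) (use N_pos in \<open>auto simp: inj_on_def tuples_def\<close>)

lemma column_norm2_summable: "(\<lambda>ys. l2_norm2 (idx k) (\<lambda>i. \<Psi> (i # ys))) summable_on tuples (N - 1) k"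
  and column_norm2_sum: "infsum (\<lambda>ys. l2_norm2 (idx k) (\<lambda>i. \<Psi> (i # ys))) (tuples (N - 1) k) = 1"
proof -
  have S: "(\<lambda>(ys,i). (norm (\<Psi> (i # ys)))\<^sup>2) summable_on (tuples (N - 1) k \<times> idx k)"
    using first_slot_summable by (subst summable_on_swap) (simp add: case_prod_unfold)
  from summable_on_Sigma_banach[OF S]
  show "(\<lambda>ys. l2_norm2 (idx k) (\<lambda>i. \<Psi> (i # ys))) summable_on tuples (N - 1) k"
    unfolding l2_norm2_def by simp
  have "infsum (\<lambda>ys. l2_norm2 (idx k) (\<lambda>i. \<Psi> (i # ys))) (tuples (N - 1) k)
      = infsum (\<lambda>(ys,i). (norm (\<Psi> (i # ys)))\<^sup>2) (tuples (N - 1) k \<times> idx k)"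
    unfolding l2_norm2_def using infsum_Sigma'_banach[OF S] by simp
  also have "\<dots> = infsum (\<lambda>(i,ys). (norm (\<Psi> (i # ys)))\<^sup>2) (idx k \<times> tuples (N - 1) k)"
    by (subst infsum_product_swap) (simp add: case_prod_unfold)
  finally show "infsum (\<lambda>ys. l2_norm2 (idx k) (\<lambda>i. \<Psi> (i # ys))) (tuples (N - 1) k) = 1"
    using first_slot_sum by simp
qed

lemma rdm1_row_apply:
  assumes i: "i \<in> idx k" and lv: "l2 (idx k) v"
  shows "infsum (\<lambda>j. rdm1 N k \<Psi> i j * v j) (idx k)
       = of_nat N * infsum (\<lambda>ys. \<Psi> (i # ys) * cnj (contract v ys)) (tuples (N - 1) k)"
proof -
  let ?T = "tuples (N - 1) k" and ?I = "idx k"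
  define g where "g j ys = \<Psi> (i # ys) * cnj (\<Psi> (j # ys)) * v j" for j ys
  have S: "(\<lambda>(j,ys). g j ys) summable_on (?I \<times> ?T)"
  proof -
    have l1: "l2 (?I \<times> ?T) (\<lambda>(j,ys). v j * \<Psi> (i # ys))"
      using l2_times[OF lv l2_row[OF i]] by simp
    have l2': "l2 (?I \<times> ?T) (\<lambda>(j,ys). cnj (\<Psi> (j # ys)))"
      using l2_first_slot by (simp add: l2_def case_prod_unfold)
    have "(\<lambda>x. (\<lambda>(j,ys). v j * \<Psi> (i # ys)) x * (\<lambda>(j,ys). cnj (\<Psi> (j # ys))) x) summable_on (?I \<times> ?T)"
      by (rule l2_prod_summable[OF l1 l2'])
    then show ?thesis unfolding g_def by (simp add: case_prod_unfold mult_ac)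
  qed
  have "infsum (\<lambda>j. rdm1 N k \<Psi> i j * v j) ?I
      = infsum (\<lambda>j. of_nat N * (infsum (\<lambda>ys. \<Psi> (i # ys) * cnj (\<Psi> (j # ys))) ?T * v j)) ?I"
    unfolding rdm1_def by (simp add: mult.assoc)
  also have "\<dots> = of_nat N * infsum (\<lambda>j. infsum (\<lambda>ys. \<Psi> (i # ys) * cnj (\<Psi> (j # ys))) ?T * v j) ?I"
    by (rule infsum_cmult_right')
  also have "\<dots> = of_nat N * infsum (\<lambda>j. infsum (\<lambda>ys. g j ys) ?T) ?I"
    unfolding g_def by (simp add: infsum_cmult_left')
  also have "\<dots> = of_nat N * infsum (\<lambda>ys. infsum (\<lambda>j. g j ys) ?I) ?T"
    using infsum_swap_banach[OF S] by simp
  also have "\<dots> = of_nat N * infsum (\<lambda>ys. \<Psi> (i # ys) * cnj (contract v ys)) ?T"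
  proof -
    have "infsum (\<lambda>j. g j ys) ?I = \<Psi> (i # ys) * cnj (contract v ys)" for ys
    proof -
      have "infsum (\<lambda>j. g j ys) ?I = \<Psi> (i # ys) * infsum (\<lambda>j. cnj (\<Psi> (j # ys)) * v j) ?I"
        unfolding g_def by (simp add: mult.assoc infsum_cmult_right')
      also have "infsum (\<lambda>j. cnj (\<Psi> (j # ys)) * v j) ?I = cnj (contract v ys)"
        unfolding contract_def l2_inner_def by (simp flip: infsum_cnj add: mult.commute)
      finally show ?thesis .
    qed
    then show ?thesis by simp
  qed
  finally show ?thesis .
qed

lemma inner_rdm1_apply:
  assumes lu: "l2 (idx k) u" and lv: "l2 (idx k) v" and lc: "l2 (tuples (N - 1) k) (contract v)"
  shows "inner_k k u (apply_op k (rdm1 N k \<Psi>) v) = of_nat N * l2_inner (tuples (N - 1) k) (contract v) (contract u)"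
proof -
  let ?T = "tuples (N - 1) k" and ?I = "idx k"
  define h where "h i ys = cnj (u i) * \<Psi> (i # ys) * cnj (contract v ys)" for i ys
  have S: "(\<lambda>(i,ys). h i ys) summable_on (?I \<times> ?T)"
  proof -
    have l1: "l2 (?I \<times> ?T) (\<lambda>(i,ys). cnj (u i) * cnj (contract v ys))"
      using l2_times[of ?I "\<lambda>i. cnj (u i)" ?T "\<lambda>ys. cnj (contract v ys)"] lu lc by (simp add: l2_cnj)
    have "(\<lambda>x. (\<lambda>(i,ys). cnj (u i) * cnj (contract v ys)) x * (\<lambda>(i,ys). \<Psi> (i # ys)) x) summable_on (?I \<times> ?T)"
      by (rule l2_prod_summable[OF l1 l2_first_slot])
    then show ?thesis unfolding h_def by (simp add: case_prod_unfold mult_ac)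
  qed
  have "inner_k k u (apply_op k (rdm1 N k \<Psi>) v)
      = infsum (\<lambda>i. cnj (u i) * (of_nat N * infsum (\<lambda>ys. \<Psi> (i # ys) * cnj (contract v ys)) ?T)) ?I"
    unfolding inner_k_def apply_op_def
    by (intro infsum_cong) (simp add: rdm1_row_apply[OF _ lv])
  also have "\<dots> = of_nat N * infsum (\<lambda>i. infsum (\<lambda>ys. h i ys) ?T) ?I"
    unfolding h_def
    by (simp add: infsum_cmult_right' mult.assoc mult.left_commute[of "cnj (u _)"] flip: infsum_cmult_right')
  also have "\<dots> = of_nat N * infsum (\<lambda>ys. infsum (\<lambda>i. h i ys) ?I) ?T"
    using infsum_swap_banach[OF S] by simp
  also have "\<dots> = of_nat N * l2_inner ?T (contract v) (contract u)"
  proof -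
    have "infsum (\<lambda>i. h i ys) ?I = cnj (contract v ys) * contract u ys" for ys
      unfolding h_def contract_def l2_inner_def
      by (simp add: infsum_cmult_left' mult.commute)
    then show ?thesis unfolding l2_inner_def by simp
  qed
  finally show ?thesis .
qed

lemma l2_split_slot:
  assumes zs: "set zs \<subseteq> idx k" and len: "j + 1 + length zs = N"
  shows "l2 (tuples j k \<times> idx k) (\<lambda>(ys,y). \<Psi> (ys @ y # zs))"
proof -
  have "l2 (tuples j k \<times> idx k) (\<lambda>w. \<Psi> ((\<lambda>(ys,y). ys @ y # zs) w))"
  proof (rule l2_reindex[OF l2_state])
    show "inj_on (\<lambda>(ys, y). ys @ y # zs) (tuples j k \<times> idx k)"
      by (auto simp: inj_on_def tuples_def)
    show "(\<lambda>(ys, y). ys @ y # zs) ` (tuples j k \<times> idx k) \<subseteq> tuples N k"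
      using zs len by (auto simp: tuples_def)
  qed
  then show ?thesis by (simp add: case_prod_unfold)
qed

lemma move_slot_to_front:
  assumes L: "L \<in> tuples N k" and t: "t < N"
  obtains R s where "R \<in> tuples (N - 1) k" and "\<And>y. \<Psi> (L[t := y]) = s * \<Psi> (y # R)"
proof
  define p where "p = Transposition.transpose (0::nat) t"
  define R where "R = tl (permute_list p L)"
  have lenL: "length L = N" using L by (simp add: tuples_def)
  have pp: "p permutes {..<N}" unfolding p_def using t by (intro permutes_swap_id) auto
  have ss: "of_int (sign p) * of_int (sign p) = (1::complex)"
    by (metis of_int_mult of_int_1 sign_idempotent)
  have "\<Psi> (y # R) = of_int (sign p) * \<Psi> (L[t := y])" for y
    using antisymmetric[of "L[t := y]" p] pp lenL permute_list_transpose_update[of t L y] t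
    by (simp add: p_def R_def)
  then show "\<Psi> (L[t := y]) = of_int (sign p) * \<Psi> (y # R)" for y
    using ss by (simp add: mult.assoc[symmetric])
  have "set (permute_list p L) = set L" using pp lenL by simp
  moreover have "set (tl (permute_list p L)) \<subseteq> set (permute_list p L)"
    by (metis list.sel(2) list.set_sel(2) subsetI)
  ultimately show "R \<in> tuples (N - 1) k" using L lenL unfolding R_def tuples_def by auto
qed

lemma l2_contract:
  assumes lv: "l2 (idx k) v" and nv: "l2_inner (idx k) v v = 1"
  shows "l2 (tuples (N - 1) k) (contract v)"
  unfolding l2_def
proof (rule summable_on_comparison_test[OF column_norm2_summable])
  fix ys assume ys: "ys \<in> tuples (N - 1) k"
  show "(norm (contract v ys))\<^sup>2 \<le> l2_norm2 (idx k) (\<lambda>i. \<Psi> (i # ys))"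
    unfolding contract_def by (rule l2_inner_unit_norm_le[OF lv nv l2_column[OF ys]])
qed auto

lemma rdm1_eigenvector_orthogonal:
  assumes lu: "l2 (idx k) u" and nu: "l2_inner (idx k) u u = 1"
    and lv: "l2 (idx k) v" and nv: "l2_inner (idx k) v v = 1"
    and eu: "apply_op k (rdm1 N k \<Psi>) u = (\<lambda>i. complex_of_real \<alpha> * u i)"
    and ev: "apply_op k (rdm1 N k \<Psi>) v = (\<lambda>i. complex_of_real \<beta> * v i)"
    and ne: "\<alpha> \<noteq> \<beta>"
  shows "l2_inner (idx k) u v = 0"
proof -
  have g1: "complex_of_real \<beta> * l2_inner (idx k) u v = of_nat N * l2_inner (tuples (N - 1) k) (contract v) (contract u)"
    using inner_rdm1_apply[OF lu lv l2_contract[OF lv nv]] ev by (simp add: inner_k_eq_l2_inner l2_inner_cmult_right)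
  have g2: "complex_of_real \<alpha> * l2_inner (idx k) v u = of_nat N * l2_inner (tuples (N - 1) k) (contract u) (contract v)"
    using inner_rdm1_apply[OF lv lu l2_contract[OF lu nu]] eu by (simp add: inner_k_eq_l2_inner l2_inner_cmult_right)
  have "cnj (complex_of_real \<alpha> * l2_inner (idx k) v u) = cnj (of_nat N * l2_inner (tuples (N - 1) k) (contract u) (contract v))"
    using g2 by simp
  then have "complex_of_real \<alpha> * l2_inner (idx k) u v = of_nat N * l2_inner (tuples (N - 1) k) (contract v) (contract u)"
    by (simp add: l2_inner_cnj)
  with g1 have "(complex_of_real \<alpha> - complex_of_real \<beta>) * l2_inner (idx k) u v = 0"
    by (simp add: left_diff_distrib)
  then show ?thesis using ne by simp
qed

end

locale orbitals = fermion +
  fixes P :: "nat set" and f :: "nat \<Rightarrow> nat \<Rightarrow> complex" and occ :: "nat \<Rightarrow> real"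
  assumes finite_P: "finite P"
    and l2_orbital: "\<And>a. a \<in> P \<Longrightarrow> l2 (idx k) (f a)"
    and orthonormal: "\<And>a b. a \<in> P \<Longrightarrow> b \<in> P \<Longrightarrow> l2_inner (idx k) (f a) (f b) = (if a = b then 1 else 0)"
    and eigenvector: "\<And>a. a \<in> P \<Longrightarrow> apply_op k (rdm1 N k \<Psi>) (f a) = (\<lambda>i. complex_of_real (occ a) * f a i)"
    and occ_sum: "(\<Sum>a\<in>P. occ a) = real N"
begin

lemma l2_contract_orbital: "a \<in> P \<Longrightarrow> l2 (tuples (N - 1) k) (contract (f a))"
  using l2_contract[OF l2_orbital] orthonormal by auto

lemma l2_norm2_contract_orbital: "a \<in> P \<Longrightarrow> l2_norm2 (tuples (N - 1) k) (contract (f a)) = occ a / real N"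
proof -
  assume a: "a \<in> P"
  have "complex_of_real (occ a) * l2_inner (idx k) (f a) (f a) = of_nat N * l2_inner (tuples (N - 1) k) (contract (f a)) (contract (f a))"
    using inner_rdm1_apply[OF l2_orbital[OF a] l2_orbital[OF a] l2_contract_orbital[OF a]] eigenvector[OF a] by (simp add: inner_k_eq_l2_inner l2_inner_cmult_right)
  then have "complex_of_real (occ a) = complex_of_real (real N * l2_norm2 (tuples (N - 1) k) (contract (f a)))"
    using orthonormal[OF a a] by (simp add: l2_inner_self)
  then have "occ a = real N * l2_norm2 (tuples (N - 1) k) (contract (f a))" by (simp only: of_real_eq_iff)
  then show ?thesis using N_pos by (simp add: field_simps)
qed

lemma orbital_weights_summable:
    "(\<lambda>ys. \<Sum>a\<in>P. (norm (contract (f a) ys))\<^sup>2) summable_on tuples (N - 1) k"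
  and orbital_weights_sum:
    "infsum (\<lambda>ys. \<Sum>a\<in>P. (norm (contract (f a) ys))\<^sup>2) (tuples (N - 1) k) = 1"
proof -
  let ?T = "tuples (N - 1) k"
  show "(\<lambda>ys. \<Sum>a\<in>P. (norm (contract (f a) ys))\<^sup>2) summable_on ?T"
    using finite_P l2_contract_orbital unfolding l2_def by (intro summable_on_finite_sum) auto
  have "infsum (\<lambda>ys. \<Sum>a\<in>P. (norm (contract (f a) ys))\<^sup>2) ?T = (\<Sum>a\<in>P. l2_norm2 ?T (contract (f a)))"
    unfolding l2_norm2_def using finite_P l2_contract_orbital unfolding l2_def
    by (intro infsum_finite_sum) auto
  also have "\<dots> = (\<Sum>a\<in>P. occ a / real N)" using l2_norm2_contract_orbital by simp
  also have "\<dots> = 1" using occ_sum N_pos by (simp flip: sum_divide_distrib)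
  finally show "infsum (\<lambda>ys. \<Sum>a\<in>P. (norm (contract (f a) ys))\<^sup>2) ?T = 1" .
qed

text \<open>By Bessel, the residual of each column has squared norm equal to the column norm minus
  its orbital weights; both sum to 1 over all columns, so every residual vanishes.\<close>

lemma column_residual_norm2_eq_0:
  assumes ys: "ys \<in> tuples (N - 1) k"
  shows "l2_norm2 (idx k) (\<lambda>j. \<Psi> (j # ys) - (\<Sum>a\<in>P. contract (f a) ys * f a j)) = 0"
proof -
  let ?T = "tuples (N - 1) k" and ?I = "idx k"
  define D where "D zs = l2_norm2 ?I (\<lambda>j. \<Psi> (j # zs)) - (\<Sum>a\<in>P. (norm (contract (f a) zs))\<^sup>2)" for zs
  have bessel: "l2_norm2 ?I (\<lambda>j. \<Psi> (j # zs) - (\<Sum>a\<in>P. contract (f a) zs * f a j)) = D zs"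
    if "zs \<in> ?T" for zs
    unfolding D_def contract_def
    by (rule bessel_identity[OF finite_P l2_orbital orthonormal l2_column[OF that]])
  have "D ys = 0"
  proof (rule nonneg_infsum_le_0D[of D ?T])
    show "D summable_on ?T"
      unfolding D_def by (rule summable_on_diff[OF column_norm2_summable orbital_weights_summable])
    show "infsum D ?T \<le> 0"
      unfolding D_def
      using infsum_diff[OF column_norm2_summable orbital_weights_summable] column_norm2_sum orbital_weights_sum
      by simp
    show "0 \<le> D zs" if "zs \<in> ?T" for zs
      unfolding bessel[OF that, symmetric] by (rule l2_norm2_nonneg)
  qed (rule ys)
  then show ?thesis using bessel[OF ys] by simp
qed

lemma column_expansion:
  assumes ys: "ys \<in> tuples (N - 1) k" and i: "i \<in> idx k"
  shows "\<Psi> (i # ys) = (\<Sum>a\<in>P. contract (f a) ys * f a i)"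
proof -
  have "l2 (idx k) (\<lambda>j. \<Psi> (j # ys) - (\<Sum>a\<in>P. contract (f a) ys * f a j))"
    using l2_column[OF ys] finite_P l2_orbital by (intro l2_diff l2_sum l2_cmult) auto
  from l2_norm2_eq_0D[OF this column_residual_norm2_eq_0[OF ys] i] show ?thesis by simp
qed

lemma slot_expansion:
  assumes L: "L \<in> tuples N k" and t: "t < N" and x: "x \<in> idx k"
  shows "\<Psi> (L[t := x]) = (\<Sum>b\<in>P. f b x * l2_inner (idx k) (f b) (\<lambda>y. \<Psi> (L[t := y])))"
proof -
  obtain R s where R: "R \<in> tuples (N - 1) k" and eq: "\<And>y. \<Psi> (L[t := y]) = s * \<Psi> (y # R)"
    by (rule move_slot_to_front[OF L t]) (rule that)
  have "\<Psi> (L[t := x]) = s * (\<Sum>b\<in>P. contract (f b) R * f b x)"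
    using eq column_expansion[OF R x] by simp
  also have "\<dots> = (\<Sum>b\<in>P. f b x * (s * contract (f b) R))"
    by (simp add: sum_distrib_left mult_ac)
  also have "\<dots> = (\<Sum>b\<in>P. f b x * l2_inner (idx k) (f b) (\<lambda>y. \<Psi> (L[t := y])))"
    unfolding eq contract_def by (simp add: l2_inner_cmult_right)
  finally show ?thesis .
qed

text \<open>\<open>partial_coef j as zs\<close> is the coefficient of \<open>f\<^bsub>a\<^sub>1\<^esub> \<otimes> \<dots> \<otimes> f\<^bsub>a\<^sub>j\<^esub>\<close> in the first \<open>j\<close>
  slots of \<open>\<Psi>(\<cdot>, zs)\<close>; it interpolates between \<open>\<Psi>\<close> itself (\<open>j = 0\<close>) and \<open>coef\<close> (\<open>j = N\<close>).\<close>

definition partial_coef :: "nat \<Rightarrow> nat list \<Rightarrow> nat list \<Rightarrow> complex" where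
  "partial_coef j as zs = l2_inner (tuples j k) (tensor f as) (\<lambda>ys. \<Psi> (ys @ zs))"

lemma l2_tensor: "as \<in> lists_over P j \<Longrightarrow> l2 (tuples j k) (tensor f as)"
  using tensor_orthonormal[OF l2_orbital orthonormal, where zs=as and ws=as and n=j] by (auto intro: l2_if_inner_self_summable)

lemma partial_coef_snoc:
  assumes as: "as \<in> lists_over P j" and b: "b \<in> P" and zs: "set zs \<subseteq> idx k"
    and len: "j + 1 + length zs = N"
  defines "g \<equiv> \<lambda>ys. cnj (tensor f as ys) * l2_inner (idx k) (f b) (\<lambda>y. \<Psi> (ys @ y # zs))"
  shows "g summable_on tuples j k" and "infsum g (tuples j k) = partial_coef (Suc j) (as @ [b]) zs"
proof -
  let ?T = "tuples j k" and ?I = "idx k"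
  have "l2 (?T \<times> ?I) (\<lambda>(ys,y). cnj (tensor f as ys) * cnj (f b y))"
    using l2_times[of ?T "\<lambda>ys. cnj (tensor f as ys)" ?I "\<lambda>y. cnj (f b y)"] l2_tensor[OF as] l2_orbital[OF b]
    by (simp add: l2_cnj)
  from l2_prod_summable[OF this l2_split_slot[OF zs len]]
  have S: "(\<lambda>(ys,y). cnj (tensor f as ys) * (cnj (f b y) * \<Psi> (ys @ y # zs))) summable_on (?T \<times> ?I)"
    by (simp add: case_prod_unfold mult_ac)
  have g_eq: "g = (\<lambda>ys. infsum (\<lambda>y. cnj (tensor f as ys) * (cnj (f b y) * \<Psi> (ys @ y # zs))) ?I)"
    unfolding g_def l2_inner_def by (simp add: infsum_cmult_right')
  show "g summable_on ?T"
    unfolding g_eq using summable_on_Sigma_banach[OF S] by simp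
  have "infsum g ?T = infsum (\<lambda>(ys,y). cnj (tensor f as ys) * (cnj (f b y) * \<Psi> (ys @ y # zs))) (?T \<times> ?I)"
    unfolding g_eq using infsum_Sigma'_banach[OF S] by simp
  also have "\<dots> = infsum (\<lambda>(ys,y). cnj (tensor f (as @ [b]) (ys @ [y])) * \<Psi> ((ys @ [y]) @ zs)) (?T \<times> ?I)"
    using as by (intro infsum_cong) (auto simp: tensor_snoc lists_over_def tuples_def mult_ac)
  also have "\<dots> = partial_coef (Suc j) (as @ [b]) zs"
    unfolding partial_coef_def l2_inner_def infsum_tuples_snoc by (simp add: case_prod_unfold)
  finally show "infsum g ?T = partial_coef (Suc j) (as @ [b]) zs" .
qed

lemma partial_coef_Cons:
  assumes as: "as \<in> lists_over P j" and x: "x \<in> idx k" and zs: "set zs \<subseteq> idx k"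
    and len: "j + 1 + length zs = N"
  shows "partial_coef j as (x # zs) = (\<Sum>b\<in>P. f b x * partial_coef (Suc j) (as @ [b]) zs)"
proof -
  let ?T = "tuples j k"
  define S where "S b ys = l2_inner (idx k) (f b) (\<lambda>y. \<Psi> (ys @ y # zs))" for b ys
  have pt: "\<Psi> (ys @ x # zs) = (\<Sum>b\<in>P. f b x * S b ys)" if ys: "ys \<in> ?T" for ys
  proof -
    have L: "ys @ x # zs \<in> tuples N k" using ys x zs len by (auto simp: tuples_def)
    have ly: "length ys = j" using ys by (simp add: tuples_def)
    have "(ys @ x # zs)[j := y] = ys @ y # zs" for y using ly by (simp add: list_update_append)
    then show ?thesis using slot_expansion[OF L _ x, of j] len ly unfolding S_def by simp
  qed
  note snoc = partial_coef_snoc[OF as _ zs len, folded S_def]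
  have "partial_coef j as (x # zs) = infsum (\<lambda>ys. \<Sum>b\<in>P. f b x * (cnj (tensor f as ys) * S b ys)) ?T"
    unfolding partial_coef_def l2_inner_def
    by (intro infsum_cong) (simp add: pt sum_distrib_left mult_ac)
  also have "\<dots> = (\<Sum>b\<in>P. f b x * infsum (\<lambda>ys. cnj (tensor f as ys) * S b ys) ?T)"
    using finite_P snoc(1)
    by (simp add: infsum_finite_sum summable_on_cmult_right infsum_cmult_right')
  also have "\<dots> = (\<Sum>b\<in>P. f b x * partial_coef (Suc j) (as @ [b]) zs)"
    using snoc(2) by simp
  finally show ?thesis .
qed

lemma prefix_expansion:
  assumes xs: "xs \<in> tuples N k"
  shows "j \<le> N \<Longrightarrow> \<Psi> xs = (\<Sum>as\<in>lists_over P j. tensor f as (take j xs) * partial_coef j as (drop j xs))"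
proof (induction j)
  case 0
  have "partial_coef 0 [] xs = \<Psi> xs" by (simp add: partial_coef_def l2_inner_def tuples_0)
  then show ?case by (simp add: lists_over_0)
next
  case (Suc j)
  then have IH: "\<Psi> xs = (\<Sum>as\<in>lists_over P j. tensor f as (take j xs) * partial_coef j as (drop j xs))" by simp
  have lxs: "length xs = N" "set xs \<subseteq> idx k" using xs by (auto simp: tuples_def)
  have jN: "j < N" using Suc by simp
  define x where "x = xs ! j"
  define zs where "zs = drop (Suc j) xs"
  have dj: "drop j xs = x # zs" unfolding x_def zs_def using jN lxs by (simp add: Cons_nth_drop_Suc)
  have tk: "take (Suc j) xs = take j xs @ [x]" unfolding x_def using jN lxs by (simp add: take_Suc_conv_app_nth)
  have x: "x \<in> idx k" unfolding x_def using jN lxs by auto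
  have zs: "set zs \<subseteq> idx k" unfolding zs_def using lxs by (meson order_trans set_drop_subset)
  have len: "j + 1 + length zs = N" unfolding zs_def using jN lxs by simp
  have ltk: "length (take j xs) = j" using jN lxs by simp
  have "\<Psi> xs = (\<Sum>as\<in>lists_over P j. tensor f as (take j xs) * (\<Sum>b\<in>P. f b x * partial_coef (Suc j) (as @ [b]) zs))"
    unfolding IH dj by (intro sum.cong refl) (simp add: partial_coef_Cons[OF _ x zs len])
  also have "\<dots> = (\<Sum>as\<in>lists_over P j. \<Sum>b\<in>P. tensor f (as @ [b]) (take (Suc j) xs) * partial_coef (Suc j) (as @ [b]) zs)"
    unfolding tk
  proof (intro sum.cong refl)
    fix as assume "as \<in> lists_over P j"
    then have "length as = length (take j xs)" using ltk by (simp add: lists_over_def)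
    then show "tensor f as (take j xs) * (\<Sum>b\<in>P. f b x * partial_coef (Suc j) (as @ [b]) zs) =
       (\<Sum>b\<in>P. tensor f (as @ [b]) (take j xs @ [x]) * partial_coef (Suc j) (as @ [b]) zs)"
      by (simp add: sum_distrib_left tensor_snoc mult_ac)
  qed
  also have "\<dots> = (\<Sum>as\<in>lists_over P (Suc j). tensor f as (take (Suc j) xs) * partial_coef (Suc j) as (drop (Suc j) xs))"
    unfolding zs_def by (simp add: sum_lists_over_snoc[OF finite_P])
  finally show ?case .
qed

definition coef :: "nat list \<Rightarrow> complex" where
  "coef as = l2_inner (tuples N k) (tensor f as) \<Psi>"

lemma state_expansion:
  assumes xs: "xs \<in> tuples N k"
  shows "\<Psi> xs = (\<Sum>as\<in>lists_over P N. coef as * tensor f as xs)"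
proof -
  have l: "length xs = N" using xs by (simp add: tuples_def)
  show ?thesis using prefix_expansion[OF xs, of N] l by (simp add: partial_coef_def coef_def mult.commute)
qed

lemma coef_permute:
  assumes p: "p permutes {..<N}" and la: "length as = N"
  shows "coef (permute_list p as) = of_int (sign p) * coef as"
proof -
  let ?T = "tuples N k"
  have inv_p: "inv p permutes {..<N}" using p by (rule permutes_inv)
  have "coef (permute_list p as) = infsum (\<lambda>xs. cnj (tensor f (permute_list p as) xs) * \<Psi> xs) ?T"
    unfolding coef_def l2_inner_def ..
  also have "\<dots> = infsum (\<lambda>ys. cnj (tensor f (permute_list p as) (permute_list p ys)) * \<Psi> (permute_list p ys)) ?T"
  proof (rule infsum_reindex_bij_witness[where i="permute_list p" and j="permute_list (inv p)"])
    fix xs assume "xs \<in> ?T"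
    then have l: "length xs = N" by (simp add: tuples_def)
    show "permute_list p (permute_list (inv p) xs) = xs" using permute_list_inv(2)[of p xs] p l by simp
    show "permute_list (inv p) xs \<in> ?T" using \<open>xs \<in> ?T\<close> inv_p l by (simp add: tuples_def)
    show "cnj (tensor f (permute_list p as) (permute_list p (permute_list (inv p) xs))) * \<Psi> (permute_list p (permute_list (inv p) xs))
        = cnj (tensor f (permute_list p as) xs) * \<Psi> xs" using permute_list_inv(2)[of p xs] p l by simp
  next
    fix ys assume "ys \<in> ?T"
    then have l: "length ys = N" by (simp add: tuples_def)
    show "permute_list (inv p) (permute_list p ys) = ys" using permute_list_inv(1)[of p ys] p l by simp
    show "permute_list p ys \<in> ?T" using \<open>ys \<in> ?T\<close> p l by (simp add: tuples_def)
  qed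
  also have "\<dots> = infsum (\<lambda>ys. cnj (tensor f as ys) * (of_int (sign p) * \<Psi> ys)) ?T"
    by (intro infsum_cong) (auto simp: tensor_permute[OF p la] tuples_def antisymmetric[OF _ p])
  also have "\<dots> = of_int (sign p) * coef as"
    unfolding coef_def l2_inner_def by (simp add: mult.left_commute infsum_cmult_right')
  finally show ?thesis .
qed

lemma contract_orbital_expansion:
  assumes a: "a \<in> P" and ys: "ys \<in> tuples (N - 1) k"
  shows "contract (f a) ys = (\<Sum>zs\<in>lists_over P (N - 1). coef (a # zs) * tensor f zs ys)"
proof -
  let ?I = "idx k"
  define C where "C c = (\<Sum>zs\<in>lists_over P (N - 1). coef (c # zs) * tensor f zs ys)" for c
  have pt: "\<Psi> (i # ys) = (\<Sum>c\<in>P. C c * f c i)" if i: "i \<in> ?I" for i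
  proof -
    have "i # ys \<in> tuples N k" using i ys N_pos by (auto simp: tuples_def)
    then have "\<Psi> (i # ys) = (\<Sum>cs\<in>lists_over P (Suc (N - 1)). coef cs * tensor f cs (i # ys))"
      using state_expansion N_eq_Suc by simp
    also have "\<dots> = (\<Sum>c\<in>P. \<Sum>zs\<in>lists_over P (N - 1). coef (c # zs) * (f c i * tensor f zs ys))"
      by (simp add: sum_lists_over_Suc[OF finite_P])
    also have "\<dots> = (\<Sum>c\<in>P. C c * f c i)"
      unfolding C_def by (simp add: sum_distrib_right sum_distrib_left mult_ac)
    finally show ?thesis .
  qed
  have "contract (f a) ys = l2_inner ?I (f a) (\<lambda>i. \<Sum>c\<in>P. C c * f c i)"
    unfolding contract_def by (rule l2_inner_cong) (auto simp: pt)
  also have "\<dots> = C a"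
    using finite_P l2_orbital orthonormal a by (rule l2_inner_orthonormal_sum)
  also have "\<dots> = (\<Sum>zs\<in>lists_over P (N - 1). coef (a # zs) * tensor f zs ys)"
    by (simp add: C_def)
  finally show ?thesis .
qed

lemma coef_rdm1:
  assumes a: "a \<in> P" and b: "b \<in> P"
  shows "of_nat N * (\<Sum>zs\<in>lists_over P (N - 1). coef (a # zs) * cnj (coef (b # zs))) = (if a = b then complex_of_real (occ a) else 0)"
proof -
  let ?T = "tuples (N - 1) k" and ?Q = "lists_over P (N - 1)"
  have finQ: "finite ?Q" using finite_P by (rule finite_lists_over)
  have lF: "zs \<in> ?Q \<Longrightarrow> l2 ?T (tensor f zs)" for zs by (rule l2_tensor)
  have oF: "ws \<in> ?Q \<Longrightarrow> zs \<in> ?Q \<Longrightarrow> l2_inner ?T (tensor f ws) (tensor f zs) = (if ws = zs then 1 else 0)" for ws zs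
    using tensor_orthonormal[OF l2_orbital orthonormal, where zs=ws and ws=zs and n="N - 1"] by simp
  have lsum: "l2 ?T (\<lambda>ys. \<Sum>zs\<in>?Q. coef (c # zs) * tensor f zs ys)" for c
    using finQ lF by (intro l2_sum l2_cmult) auto
  have inner: "l2_inner ?T (tensor f ws) (\<lambda>ys. \<Sum>zs\<in>?Q. coef (a # zs) * tensor f zs ys) = coef (a # ws)"
    if "ws \<in> ?Q" for ws
    using finQ lF oF that by (rule l2_inner_orthonormal_sum)
  have "l2_inner ?T (contract (f b)) (contract (f a)) = l2_inner ?T (\<lambda>ys. \<Sum>ws\<in>?Q. coef (b # ws) * tensor f ws ys) (\<lambda>ys. \<Sum>zs\<in>?Q. coef (a # zs) * tensor f zs ys)"
    by (rule l2_inner_cong) (auto simp: contract_orbital_expansion a b)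
  also have "\<dots> = (\<Sum>ws\<in>?Q. l2_inner ?T (\<lambda>ys. coef (b # ws) * tensor f ws ys) (\<lambda>ys. \<Sum>zs\<in>?Q. coef (a # zs) * tensor f zs ys))"
    using finQ lsum lF by (intro l2_inner_sum_left) (auto intro: l2_cmult)
  also have "\<dots> = (\<Sum>ws\<in>?Q. cnj (coef (b # ws)) * coef (a # ws))"
  proof (intro sum.cong refl)
    fix ws assume ws: "ws \<in> ?Q"
    show "l2_inner ?T (\<lambda>ys. coef (b # ws) * tensor f ws ys) (\<lambda>ys. \<Sum>zs\<in>?Q. coef (a # zs) * tensor f zs ys) = cnj (coef (b # ws)) * coef (a # ws)"
      using inner[OF ws] by (simp add: l2_inner_cmult_left)
  qed
  finally have e1: "l2_inner ?T (contract (f b)) (contract (f a)) = (\<Sum>ws\<in>?Q. coef (a # ws) * cnj (coef (b # ws)))"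
    by (simp add: mult.commute)
  have "inner_k k (f a) (apply_op k (rdm1 N k \<Psi>) (f b)) = of_nat N * l2_inner ?T (contract (f b)) (contract (f a))"
    by (rule inner_rdm1_apply[OF l2_orbital[OF a] l2_orbital[OF b] l2_contract_orbital[OF b]])
  moreover have "inner_k k (f a) (apply_op k (rdm1 N k \<Psi>) (f b)) = complex_of_real (occ b) * (if a = b then 1 else 0)"
    using eigenvector[OF b] orthonormal[OF a b] by (simp add: inner_k_eq_l2_inner l2_inner_cmult_right)
  ultimately show ?thesis using e1 by auto
qed

lemma coef_norm2_sum: "(\<Sum>as\<in>lists_over P N. (norm (coef as))\<^sup>2) = 1"
proof -
  have each: "(\<Sum>zs\<in>lists_over P (N - 1). (norm (coef (a # zs)))\<^sup>2) = occ a / real N" if a: "a \<in> P" for a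
  proof -
    have sq: "(\<Sum>zs\<in>lists_over P (N - 1). coef (a # zs) * cnj (coef (a # zs))) = complex_of_real (\<Sum>zs\<in>lists_over P (N - 1). (norm (coef (a # zs)))\<^sup>2)"
      unfolding of_real_sum by (intro sum.cong refl) (metis complex_norm_square)
    have "complex_of_real (real N * (\<Sum>zs\<in>lists_over P (N - 1). (norm (coef (a # zs)))\<^sup>2)) = complex_of_real (occ a)"
      using coef_rdm1[OF a a] unfolding sq by simp
    then have "real N * (\<Sum>zs\<in>lists_over P (N - 1). (norm (coef (a # zs)))\<^sup>2) = occ a" by (simp only: of_real_eq_iff)
    then show ?thesis using N_pos by (simp add: field_simps)
  qed
  have "(\<Sum>as\<in>lists_over P N. (norm (coef as))\<^sup>2) = (\<Sum>as\<in>lists_over P (Suc (N - 1)). (norm (coef as))\<^sup>2)"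
    using N_eq_Suc by simp
  also have "\<dots> = (\<Sum>a\<in>P. \<Sum>zs\<in>lists_over P (N - 1). (norm (coef (a # zs)))\<^sup>2)"
    by (rule sum_lists_over_Suc[OF finite_P])
  also have "\<dots> = (\<Sum>a\<in>P. occ a / real N)" using each by simp
  also have "\<dots> = 1" using occ_sum N_pos by (simp flip: sum_divide_distrib)
  finally show ?thesis .
qed

definition coef_state :: "nat list \<Rightarrow> complex" where
  "coef_state as = (if as \<in> lists_over P N then coef as else 0)"

lemma fermion_state_coef_state:
  assumes Pk: "P \<subseteq> idx k'"
  shows "fermion_state N k' coef_state"
  unfolding fermion_state_def
proof (intro conjI allI impI)
  have sub: "lists_over P N \<subseteq> tuples N k'" using Pk by (auto simp: lists_over_def tuples_def)
  show "coef_state xs = 0" if "xs \<notin> tuples N k'" for xs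
    using that sub unfolding coef_state_def by auto
  show "coef_state (permute_list p xs) = of_int (sign p) * coef_state xs"
    if l: "length xs = N" and p: "p permutes {..<N}" for xs p
  proof -
    have "set (permute_list p xs) = set xs" using p l by simp
    then have "permute_list p xs \<in> lists_over P N \<longleftrightarrow> xs \<in> lists_over P N" using l by (simp add: lists_over_def)
    then show ?thesis unfolding coef_state_def using coef_permute[OF p l] by simp
  qed
  have "((\<lambda>xs. (norm (coef xs))\<^sup>2) has_sum 1) (lists_over P N)"
    using coef_norm2_sum finite_lists_over[OF finite_P] by (intro has_sum_finiteI) auto
  then show "((\<lambda>xs. (norm (coef_state xs))\<^sup>2) has_sum 1) (tuples N k')"
    by (subst has_sum_cong_neutral[where T="lists_over P N" and g="\<lambda>xs. (norm (coef xs))\<^sup>2"])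
       (use sub in \<open>auto simp: coef_state_def\<close>)
qed

lemma rdm1_coef_state:
  assumes Pk: "P \<subseteq> idx k'"
  shows "rdm1 N k' coef_state a b = (if a = b \<and> a \<in> P then complex_of_real (occ a) else 0)"
proof (cases "a \<in> P \<and> b \<in> P")
  case False
  have z: "(\<lambda>ys. coef_state (a # ys) * cnj (coef_state (b # ys))) = (\<lambda>_. 0)"
    by (rule ext) (use False in \<open>auto simp: coef_state_def lists_over_def\<close>)
  show ?thesis using False by (auto simp: rdm1_def z)
next
  case True
  have sub: "lists_over P (N - 1) \<subseteq> tuples (N - 1) k'" using Pk by (auto simp: lists_over_def tuples_def)
  have mem: "c # ys \<in> lists_over P N \<longleftrightarrow> ys \<in> lists_over P (N - 1)" if "c \<in> P" for c ys
    using that N_eq_Suc by (auto simp: lists_over_def)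
  have "infsum (\<lambda>ys. coef_state (a # ys) * cnj (coef_state (b # ys))) (tuples (N - 1) k')
      = infsum (\<lambda>ys. coef (a # ys) * cnj (coef (b # ys))) (lists_over P (N - 1))"
    by (rule infsum_cong_neutral) (use True sub mem in \<open>auto simp: coef_state_def\<close>)
  also have "\<dots> = (\<Sum>ys\<in>lists_over P (N - 1). coef (a # ys) * cnj (coef (b # ys)))"
    using finite_lists_over[OF finite_P] by simp
  finally show ?thesis using coef_rdm1 True unfolding rdm1_def by auto
qed

end

section \<open>Diagonal density matrices\<close>

definition unit_vec :: "nat \<Rightarrow> nat \<Rightarrow> complex" where
  "unit_vec i = (\<lambda>j. if j = i then 1 else 0)"

lemma l2_unit_vec: "l2 (A :: nat set) (unit_vec i)"
proof -
  have "(\<lambda>j. (norm (unit_vec i j))\<^sup>2) summable_on ({i} \<inter> A)" by (rule summable_on_finite) simp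
  then show ?thesis unfolding l2_def
    by (subst summable_on_cong_neutral[where T="{i} \<inter> A"]) (auto simp: unit_vec_def)
qed

lemma l2_inner_unit_vec: "i \<in> A \<Longrightarrow> j \<in> A \<Longrightarrow> l2_inner A (unit_vec i) (unit_vec j) = (if i = j then 1 else 0)"
  unfolding l2_inner_def
  by (subst infsum_cong_neutral[where T="{i}" and g="\<lambda>x. if i = j then 1 else 0"]) (auto simp: unit_vec_def)

lemma l2_inner_unit_vec_right: "i \<in> A \<Longrightarrow> l2_inner A v (unit_vec i) = cnj (v i)"
  unfolding l2_inner_def
  by (subst infsum_cong_neutral[where T="{i}" and g="\<lambda>x. cnj (v i)"]) (auto simp: unit_vec_def)

lemma l2_norm2_unit_vec: "i \<in> A \<Longrightarrow> l2_norm2 A (unit_vec i) = 1"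
  unfolding l2_norm2_def
  by (subst infsum_cong_neutral[where T="{i}" and g="\<lambda>x. 1"]) (auto simp: unit_vec_def)

lemma orthonormal_family_card_le:
  fixes A S :: "nat set" and e :: "nat \<Rightarrow> nat \<Rightarrow> complex"
  assumes S: "finite S" "S \<subseteq> A"
    and le: "\<And>a. a < n \<Longrightarrow> l2 A (e a)"
    and on: "\<And>a b. a < n \<Longrightarrow> b < n \<Longrightarrow> l2_inner A (e a) (e b) = (if a = b then 1 else 0)"
    and supp: "\<And>a i. a < n \<Longrightarrow> e a i \<noteq> 0 \<Longrightarrow> i \<in> S"
  shows "n \<le> card S"
proof -
  have b: "(\<Sum>a<n. (norm (e a i))\<^sup>2) \<le> 1" if i: "i \<in> S" for i
  proof -
    have iA: "i \<in> A" using i S by auto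
    have eq: "l2_norm2 A (\<lambda>x. unit_vec i x - (\<Sum>a\<in>{..<n}. l2_inner A (e a) (unit_vec i) * e a x)) = l2_norm2 A (unit_vec i) - (\<Sum>a\<in>{..<n}. (norm (l2_inner A (e a) (unit_vec i)))\<^sup>2)"
      by (rule bessel_identity) (use le on l2_unit_vec in auto)
    have e2: "(\<Sum>a\<in>{..<n}. (norm (l2_inner A (e a) (unit_vec i)))\<^sup>2) = (\<Sum>a<n. (norm (e a i))\<^sup>2)"
      using l2_inner_unit_vec_right[OF iA] by simp
    have "0 \<le> l2_norm2 A (\<lambda>x. unit_vec i x - (\<Sum>a\<in>{..<n}. l2_inner A (e a) (unit_vec i) * e a x))" by (rule l2_norm2_nonneg)
    then show ?thesis using eq e2 l2_norm2_unit_vec[OF iA] by linarith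
  qed
  have n1: "l2_norm2 A (e a) = (\<Sum>i\<in>S. (norm (e a i))\<^sup>2)" if a: "a < n" for a
    unfolding l2_norm2_def
    by (subst infsum_cong_neutral[where T=S and g="\<lambda>i. (norm (e a i))\<^sup>2"]) (use S supp[OF a] in auto)
  have n2: "l2_norm2 A (e a) = 1" if a: "a < n" for a
    using on[OF a a] by (simp add: l2_inner_self)
  have "real n = (\<Sum>a<n. l2_norm2 A (e a))" using n2 by simp
  also have "\<dots> = (\<Sum>a<n. \<Sum>i\<in>S. (norm (e a i))\<^sup>2)" using n1 by simp
  also have "\<dots> = (\<Sum>i\<in>S. \<Sum>a<n. (norm (e a i))\<^sup>2)" by (rule sum.swap)
  also have "\<dots> \<le> (\<Sum>i\<in>S. 1)" using b by (intro sum_mono) auto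
  finally show ?thesis by simp
qed

definition diag_op :: "(nat \<Rightarrow> real) \<Rightarrow> nat \<Rightarrow> nat \<Rightarrow> complex" where
  "diag_op c a b = (if a = b then complex_of_real (c a) else 0)"

lemma apply_op_diag_op:
  "apply_op k (diag_op c) v = (\<lambda>i. if i \<in> idx k then complex_of_real (c i) * v i else 0)"
proof (rule ext)
  fix i
  show "apply_op k (diag_op c) v i = (if i \<in> idx k then complex_of_real (c i) * v i else 0)"
  proof (cases "i \<in> idx k")
    case True
    have "infsum (\<lambda>j. diag_op c i j * v j) (idx k) = infsum (\<lambda>j. complex_of_real (c i) * v i) {i}"
      by (rule infsum_cong_neutral) (use True in \<open>auto simp: diag_op_def\<close>)
    then show ?thesis using True by (simp add: apply_op_def)
  qed (simp add: apply_op_def)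
qed

lemma eigenspace_diag_op_iff:
  "v \<in> eigenspace_k k (diag_op c) \<mu> \<longleftrightarrow>
     is_vec k v \<and> (\<forall>i. v i \<noteq> 0 \<longrightarrow> i \<in> {i. enat i < k \<and> c i = \<mu>})"
proof
  assume v: "v \<in> eigenspace_k k (diag_op c) \<mu>"
  then have iv: "is_vec k v" and eq: "apply_op k (diag_op c) v = (\<lambda>i. complex_of_real \<mu> * v i)"
    by (auto simp: eigenspace_k_def)
  show "is_vec k v \<and> (\<forall>i. v i \<noteq> 0 \<longrightarrow> i \<in> {i. enat i < k \<and> c i = \<mu>})"
  proof (intro conjI allI impI iv)
    fix i assume vi: "v i \<noteq> 0"
    then have i: "i \<in> idx k" using iv by (auto simp: is_vec_def)
    have "complex_of_real (c i) * v i = complex_of_real \<mu> * v i"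
      using fun_cong[OF eq, of i] i by (simp add: apply_op_diag_op)
    then show "i \<in> {i. enat i < k \<and> c i = \<mu>}" using vi i by (simp add: idx_def)
  qed
next
  assume "is_vec k v \<and> (\<forall>i. v i \<noteq> 0 \<longrightarrow> i \<in> {i. enat i < k \<and> c i = \<mu>})"
  moreover from this have "apply_op k (diag_op c) v = (\<lambda>i. complex_of_real \<mu> * v i)"
    by (auto simp: apply_op_diag_op is_vec_def idx_def fun_eq_iff)
  ultimately show "v \<in> eigenspace_k k (diag_op c) \<mu>" by (simp add: eigenspace_k_def)
qed

lemma has_orthonormal_family_diag_op_iff:
  assumes finS: "finite {i. enat i < k \<and> c i = \<mu>}"
  shows "has_orthonormal_family k (eigenspace_k k (diag_op c) \<mu>) n \<longleftrightarrow>
           n \<le> card {i. enat i < k \<and> c i = \<mu>}"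
proof
  define S where "S = {i. enat i < k \<and> c i = \<mu>}"
  have SA: "S \<subseteq> idx k" by (auto simp: S_def idx_def)
  assume "has_orthonormal_family k (eigenspace_k k (diag_op c) \<mu>) n"
  then obtain e where ee: "\<forall>a<n. e a \<in> eigenspace_k k (diag_op c) \<mu>"
    and eo: "\<forall>a<n. \<forall>b<n. inner_k k (e a) (e b) = (if a = b then 1 else 0)"
    unfolding has_orthonormal_family_def by blast
  have "n \<le> card S"
  proof (rule orthonormal_family_card_le[OF finS[folded S_def] SA])
    show "\<And>a. a < n \<Longrightarrow> l2 (idx k) (e a)"
      using ee by (auto simp: eigenspace_diag_op_iff is_vec_def l2_def)
    show "\<And>a b. a < n \<Longrightarrow> b < n \<Longrightarrow> l2_inner (idx k) (e a) (e b) = (if a = b then 1 else 0)"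
      using eo by (simp add: inner_k_eq_l2_inner)
    show "\<And>a i. a < n \<Longrightarrow> e a i \<noteq> 0 \<Longrightarrow> i \<in> S"
      using ee by (auto simp: eigenspace_diag_op_iff S_def)
  qed
  then show "n \<le> card {i. enat i < k \<and> c i = \<mu>}" by (simp add: S_def)
next
  define S where "S = {i. enat i < k \<and> c i = \<mu>}"
  assume "n \<le> card {i. enat i < k \<and> c i = \<mu>}"
  then obtain F where F: "F \<subseteq> S" "card F = n" "finite F"
    unfolding S_def[symmetric] by (rule obtain_subset_with_card_n)
  obtain h where h: "bij_betw h {0..<n} F" using ex_bij_betw_nat_finite[OF F(3)] F(2) by blast
  have hS: "a < n \<Longrightarrow> h a \<in> S" for a using h F by (auto simp: bij_betw_def)
  then have hA: "a < n \<Longrightarrow> h a \<in> idx k" for a by (auto simp: S_def idx_def)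
  show "has_orthonormal_family k (eigenspace_k k (diag_op c) \<mu>) n"
    unfolding has_orthonormal_family_def
  proof (intro exI[of _ "\<lambda>a. unit_vec (h a)"] conjI allI impI)
    fix a assume a: "a < n"
    have "is_vec k (unit_vec (h a))"
      using hA[OF a] l2_unit_vec[of "idx k" "h a"] by (auto simp: is_vec_def unit_vec_def l2_def)
    then show "unit_vec (h a) \<in> eigenspace_k k (diag_op c) \<mu>"
      using hS[OF a] by (auto simp: eigenspace_diag_op_iff S_def unit_vec_def)
    fix b assume b: "b < n"
    have "h a = h b \<longleftrightarrow> a = b" using h a b by (auto simp: bij_betw_def inj_on_def)
    then show "inner_k k (unit_vec (h a)) (unit_vec (h b)) = (if a = b then 1 else 0)"
      using l2_inner_unit_vec[OF hA[OF a] hA[OF b]] by (simp add: inner_k_eq_l2_inner)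
  qed
qed

lemma ex_subset_card_iff:
  assumes "finite S"
  shows "(\<exists>F. F \<subseteq> S \<and> finite F \<and> card F = n) \<longleftrightarrow> n \<le> card S"
proof
  assume "\<exists>F. F \<subseteq> S \<and> finite F \<and> card F = n"
  then show "n \<le> card S" using card_mono[OF assms] by blast
next
  assume "n \<le> card S"
  then obtain F where "F \<subseteq> S" "card F = n" "finite F" by (rule obtain_subset_with_card_n)
  then show "\<exists>F. F \<subseteq> S \<and> finite F \<and> card F = n" by blast
qed

lemma ordered_spectrum_diag_op:
  fixes d :: nat and lam :: "nat \<Rightarrow> real"
  assumes mono: "\<forall>i j. i \<le> j \<longrightarrow> j < d \<longrightarrow> lam j \<le> lam i"
    and nonneg: "\<forall>i<d. 0 \<le> lam i"
  shows "ordered_spectrum k (diag_op (pad d lam)) (pad d lam)"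
  unfolding ordered_spectrum_def
proof (intro conjI allI impI)
  fix i j assume "i \<le> j" "enat j < k"
  then show "pad d lam j \<le> pad d lam i" using mono nonneg by (auto simp: pad_def)
next
  fix i show "0 \<le> pad d lam i" using nonneg by (simp add: pad_def)
next
  fix \<mu> :: real and n :: nat assume "\<mu> > 0"
  then have "{i. enat i < k \<and> pad d lam i = \<mu>} \<subseteq> {..<d}"
    by (auto simp: pad_def split: if_splits)
  then have "finite {i. enat i < k \<and> pad d lam i = \<mu>}" by (rule finite_subset) simp
  then show "has_orthonormal_family k (eigenspace_k k (diag_op (pad d lam)) \<mu>) n \<longleftrightarrow>
      (\<exists>F. F \<subseteq> {i. enat i < k \<and> pad d lam i = \<mu>} \<and> finite F \<and> card F = n)"
    by (simp add: has_orthonormal_family_diag_op_iff ex_subset_card_iff)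
qed

definition rank_among_equal :: "(nat \<Rightarrow> 'a) \<Rightarrow> nat \<Rightarrow> nat" where
  "rank_among_equal g i = card {j. j < i \<and> g j = g i}"

lemma rank_among_equal_less:
  "i < d \<Longrightarrow> rank_among_equal g i < card {j. j < d \<and> g j = g i}"
  unfolding rank_among_equal_def by (intro psubset_card_mono) auto

lemma rank_among_equal_strict_mono:
  "i < j \<Longrightarrow> g i = g j \<Longrightarrow> rank_among_equal g i < rank_among_equal g j"
  unfolding rank_among_equal_def by (intro psubset_card_mono) auto

lemma rank_among_equal_inj:
  assumes "g i = g j" "rank_among_equal g i = rank_among_equal g j"
  shows "i = j"
  using assms rank_among_equal_strict_mono[of i j g] rank_among_equal_strict_mono[of j i g]
  by (metis less_irrefl linorder_neqE_nat)

lemma has_orthonormal_family_pad_eigenspace: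
  assumes spec: "ordered_spectrum k A (pad d lam)" and dk: "enat d \<le> k" and \<mu>: "\<mu> > 0"
  shows "has_orthonormal_family k (eigenspace_k k A \<mu>) (card {i. i < d \<and> lam i = \<mu>})"
proof -
  have "{i. enat i < k \<and> pad d lam i = \<mu>} = {i. i < d \<and> lam i = \<mu>}"
    using \<mu> dk by (auto simp: pad_def split: if_splits) (meson enat_ord_simps(2) less_le_trans)
  moreover have "has_orthonormal_family k (eigenspace_k k A \<mu>) n \<longleftrightarrow>
      (\<exists>F. F \<subseteq> {i. enat i < k \<and> pad d lam i = \<mu>} \<and> finite F \<and> card F = n)" for n
    using spec \<mu> unfolding ordered_spectrum_def by blast
  ultimately show ?thesis by (simp add: ex_subset_card_iff)
qed

context fermion
begin

text \<open>Eigenvectors for one eigenvalue are taken from a single orthonormal family, indexed by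
  rank among the labels carrying that eigenvalue; for distinct eigenvalues they are
  orthogonal anyway.\<close>

lemma obtain_orthonormal_eigenvectors:
  assumes spec: "ordered_spectrum k (rdm1 N k \<Psi>) (pad d lam)" and dk: "enat d \<le> k"
  obtains f where
    "\<And>a. a < d \<Longrightarrow> 0 < lam a \<Longrightarrow> l2 (idx k) (f a)"
    "\<And>a. a < d \<Longrightarrow> 0 < lam a \<Longrightarrow> apply_op k (rdm1 N k \<Psi>) (f a) = (\<lambda>i. complex_of_real (lam a) * f a i)"
    "\<And>a b. a < d \<Longrightarrow> 0 < lam a \<Longrightarrow> b < d \<Longrightarrow> 0 < lam b \<Longrightarrow>
       l2_inner (idx k) (f a) (f b) = (if a = b then 1 else 0)"
proof -
  define S where "S \<mu> = {i. i < d \<and> lam i = \<mu>}" for \<mu>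
  have fam: "has_orthonormal_family k (eigenspace_k k (rdm1 N k \<Psi>) \<mu>) (card (S \<mu>))"
    if "\<mu> > 0" for \<mu>
    unfolding S_def using spec dk that by (rule has_orthonormal_family_pad_eigenspace)
  define E where "E \<mu> = (SOME e. (\<forall>a<card (S \<mu>). e a \<in> eigenspace_k k (rdm1 N k \<Psi>) \<mu>) \<and>
    (\<forall>a<card (S \<mu>). \<forall>b<card (S \<mu>). inner_k k (e a) (e b) = (if a = b then 1 else 0)))" for \<mu>
  have E: "(\<forall>a<card (S \<mu>). E \<mu> a \<in> eigenspace_k k (rdm1 N k \<Psi>) \<mu>) \<and>
    (\<forall>a<card (S \<mu>). \<forall>b<card (S \<mu>). inner_k k (E \<mu> a) (E \<mu> b) = (if a = b then 1 else 0))"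
    if "\<mu> > 0" for \<mu>
    unfolding E_def using fam[OF that] unfolding has_orthonormal_family_def by (rule someI_ex)
  define f where "f i = E (lam i) (rank_among_equal lam i)" for i
  have rank: "a < d \<Longrightarrow> rank_among_equal lam a < card (S (lam a))" for a
    unfolding S_def by (rule rank_among_equal_less)
  have eig: "f a \<in> eigenspace_k k (rdm1 N k \<Psi>) (lam a)" if "a < d" "0 < lam a" for a
    using E[OF that(2)] rank[OF that(1)] unfolding f_def by blast
  have l2: "l2 (idx k) (f a)" if "a < d" "0 < lam a" for a
    using eig[OF that] by (simp add: eigenspace_k_def is_vec_def l2_def)
  have eigv: "apply_op k (rdm1 N k \<Psi>) (f a) = (\<lambda>i. complex_of_real (lam a) * f a i)"
    if "a < d" "0 < lam a" for a
    using eig[OF that] by (simp add: eigenspace_k_def)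
  have same: "l2_inner (idx k) (f a) (f b) = (if a = b then 1 else 0)"
    if "a < d" "0 < lam a" "b < d" "lam a = lam b" for a b
  proof -
    have "inner_k k (E (lam a) (rank_among_equal lam a)) (E (lam a) (rank_among_equal lam b))
        = (if rank_among_equal lam a = rank_among_equal lam b then 1 else 0)"
      using E[OF that(2)] rank[OF that(1)] rank[OF that(3)] that(4) by auto
    then show ?thesis
      using rank_among_equal_inj[of lam a b] that by (auto simp: f_def inner_k_eq_l2_inner)
  qed
  have "l2_inner (idx k) (f a) (f b) = (if a = b then 1 else 0)"
    if "a < d" "0 < lam a" "b < d" "0 < lam b" for a b
  proof (cases "lam a = lam b")
    case False
    then show ?thesis
      using rdm1_eigenvector_orthogonal[OF l2 _ l2 _ eigv eigv False] same that by auto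
  qed (use same that in auto)
  with l2 eigv show ?thesis by (rule that)
qed

end

lemma exists_state_with_diag_rdm1:
  assumes N_pos: "N \<ge> 1" and state: "fermion_state N k \<Psi>"
    and spec: "ordered_spectrum k (rdm1 N k \<Psi>) (pad d lam)" and dk: "enat d \<le> k"
    and nonneg: "\<forall>i<d. 0 \<le> lam i" and sum: "(\<Sum>i<d. lam i) = real N"
  obtains \<Psi>' where "\<And>k'. enat d \<le> k' \<Longrightarrow> fermion_state N k' \<Psi>'"
    and "\<And>k'. enat d \<le> k' \<Longrightarrow> rdm1 N k' \<Psi>' = diag_op (pad d lam)"
proof -
  interpret fermion N k \<Psi> using N_pos state by unfold_locales
  define P where "P = {i. i < d \<and> 0 < lam i}"
  obtain f where l2: "\<And>a. a < d \<Longrightarrow> 0 < lam a \<Longrightarrow> l2 (idx k) (f a)"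
    and eig: "\<And>a. a < d \<Longrightarrow> 0 < lam a \<Longrightarrow>
      apply_op k (rdm1 N k \<Psi>) (f a) = (\<lambda>i. complex_of_real (lam a) * f a i)"
    and on: "\<And>a b. a < d \<Longrightarrow> 0 < lam a \<Longrightarrow> b < d \<Longrightarrow> 0 < lam b \<Longrightarrow>
      l2_inner (idx k) (f a) (f b) = (if a = b then 1 else 0)"
    using obtain_orthonormal_eigenvectors[OF spec dk] by blast
  have "(\<Sum>a\<in>P. lam a) = (\<Sum>i<d. lam i)"
    by (rule sum.mono_neutral_left) (use nonneg in \<open>auto simp: P_def not_less\<close>)
  then interpret orbitals N k \<Psi> P f lam
    using l2 eig on sum by unfold_locales (auto simp: P_def)
  have P_idx: "P \<subseteq> idx k'" if "enat d \<le> k'" for k'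
    using that unfolding P_def idx_def by auto (meson enat_ord_simps(2) less_le_trans)
  have rdm1_eq: "rdm1 N k' coef_state = diag_op (pad d lam)" if "enat d \<le> k'" for k'
  proof (intro ext)
    fix a b
    show "rdm1 N k' coef_state a b = diag_op (pad d lam) a b"
      using rdm1_coef_state[OF P_idx[OF that], of a b] nonneg
      by (auto simp: P_def pad_def diag_op_def not_less)
  qed
  show ?thesis
    by (rule that) (use fermion_state_coef_state P_idx rdm1_eq in blast)+
qed

lemma compatible_pad_transfer:
  assumes "compatible N k (pad d lam)" "enat d \<le> k" "enat d \<le> k'" "N \<ge> 1"
    and "\<forall>i j. i \<le> j \<longrightarrow> j < d \<longrightarrow> lam j \<le> lam i" "\<forall>i<d. 0 \<le> lam i" "(\<Sum>i<d. lam i) = real N"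
  shows "compatible N k' (pad d lam)"
proof -
  obtain \<Psi> where "fermion_state N k \<Psi>" "ordered_spectrum k (rdm1 N k \<Psi>) (pad d lam)"
    using assms(1) unfolding compatible_def by blast
  then obtain \<Psi>' where "fermion_state N k' \<Psi>'" "rdm1 N k' \<Psi>' = diag_op (pad d lam)"
    using exists_state_with_diag_rdm1[OF assms(4)] assms(2,3,6,7) by metis
  with ordered_spectrum_diag_op[OF assms(5,6)] show ?thesis
    unfolding compatible_def by metis
qed

theorem lemma1:
  fixes N d :: nat and d' :: enat and lam :: "nat \<Rightarrow> real"
  assumes "N \<ge> 1"
    and "enat d < d'"
    and "\<forall>i<d. lam i \<le> 1"
    and "\<forall>i j. i \<le> j \<longrightarrow> j < d \<longrightarrow> lam j \<le> lam i"
    and "\<forall>i<d. 0 \<le> lam i"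
    and "(\<Sum>i<d. lam i) = real N"
  shows "compatible N (enat d) (pad d lam) \<longleftrightarrow> compatible N d' (pad d lam)"
proof -
  have "enat d \<le> d'" using assms(2) by simp
  then show ?thesis
    using compatible_pad_transfer[OF _ _ _ assms(1,4,5,6), of "enat d" d']
      compatible_pad_transfer[OF _ _ _ assms(1,4,5,6), of d' "enat d"]
    by auto
qed

end
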